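(* For all $\eta\in\{0,1\}^{\mathbb Z}$, all $n\ge1$, all $y_1\le y_2\le\dots\le y_{2n}$ in $\mathbb Z$ and all $t\ge0$, \[ \mathbf E_\eta[\Sigma_y(\eta_t)]=\mathrm{Pf}\big(K^{(2n)}(t,y)\big), \] where $K^{(2n)}(t,y)$ is the antisymmetric $2n\times2n$ matrix with entries $K_t(y_i,y_j)$ for $i<j$, and $K_t(y,z)=\mathbf E_\eta[\sigma_{y,z}(\eta_t)]$ for $y\le z$.
   Context: Fix $\theta\in[0,1]$ and uniformly bounded nonnegative rates $(p_x,q_x)_{x\in\mathbb Z}$. $(\eta_t)$ is the Markov process on $\{0,1\}^{\mathbb Z}$ in which particles perform independent nearest-neighbour random walks, jumping $x\to x-1$ at rate $q_x$ and $x-1\to x$ at rate $p_x$, and when a particle jumps onto an occupied site the two particles annihilate with probability $\theta$ and coalesce into one with probability $1-\theta$ (generator $\mathcal LF(\eta)=\sum_xq_x(\theta F(\eta^a_{x,x-1})+(1-\theta)F(\eta^c_{x,x-1})-F(\eta))+\sum_xp_x(\theta F(\eta^a_{x-1,x})+(1-\theta)F(\eta^c_{x-1,x})-F(\eta))$, where $\eta^a_{x,y},\eta^c_{x,y}$ agree with $\eta$ off $\{x,y\}$, vanish at $x$, and have value $(\eta(x)+\eta(y))\bmod2$, resp. $\min\{1,\eta(x)+\eta(y)\}$, at $y$). $\mathbf E_\eta$ is expectation from initial condition $\eta$. For $y\le z$, $\eta[y,z)=\sum_{y\le x<z}\eta(x)$, $\sigma_{y,z}(\eta)=(-\theta)^{\eta[y,z)}$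 with $0^0=1$, and $\Sigma_y(\eta)=\prod_{i=1}^n\sigma_{y_{2i-1},y_{2i}}(\eta)$. $\mathrm{Pf}(A)=\frac{1}{2^nn!}\sum_{\pi\in S_{2n}}\mathrm{sgn}(\pi)\prod_{i=1}^na_{\pi(2i-1)\pi(2i)}$. *)

theory Defs
  imports "HOL-Analysis.Analysis" "HOL-Combinatorics.Permutations"
begin

text \<open>Configurations in {0,1}^Z: eta x = True means site x is occupied.
  The product topology on int => bool comes from HOL-Analysis (Function_Topology).\<close>

type_synonym config = "int \<Rightarrow> bool"

definition eta_a :: "config \<Rightarrow> int \<Rightarrow> int \<Rightarrow> config" where
  "eta_a \<eta> x y = (\<eta>(x := False))(y := (\<eta> x \<noteq> \<eta> y))"

definition eta_c :: "config \<Rightarrow> int \<Rightarrow> int \<Rightarrow> config" where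
  "eta_c \<eta> x y = (\<eta>(x := False))(y := (\<eta> x \<or> \<eta> y))"

text \<open>The generator L applied to F (meaningful for local F, where the sum has finite support).\<close>
definition gen :: "real \<Rightarrow> (int \<Rightarrow> real) \<Rightarrow> (int \<Rightarrow> real) \<Rightarrow> (config \<Rightarrow> real) \<Rightarrow> config \<Rightarrow> real" where
  "gen \<theta> p q F \<eta> =
     (\<Sum>\<^sub>\<infinity>x\<in>(UNIV::int set).
        q x * (\<theta> * F (eta_a \<eta> x (x - 1)) + (1 - \<theta>) * F (eta_c \<eta> x (x - 1)) - F \<eta>)
      + p x * (\<theta> * F (eta_a \<eta> (x - 1) x) + (1 - \<theta>) * F (eta_c \<eta> (x - 1) x) - F \<eta>))"

definition local_fun :: "(config \<Rightarrow> real) \<Rightarrow> bool" where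
  "local_fun F \<longleftrightarrow> (\<exists>A. finite A \<and> (\<forall>\<eta> \<xi>. (\<forall>x\<in>A. \<eta> x = \<xi> x) \<longrightarrow> F \<eta> = F \<xi>))"

text \<open>S is the (Feller) Markov semigroup of the process with generator L:
  S t F \<eta> = E_\<eta>[F(\<eta>_t)] for continuous F. The conditions below say that S is a
  strongly continuous positive conservative (Markov) semigroup on C({0,1}^Z) whose
  generator extends L on local functions; since the local functions form a core for the
  closure of L (bounded rates, nearest-neighbour), this determines S uniquely.\<close>
definition markov_semigroup_gen ::
  "real \<Rightarrow> (int \<Rightarrow> real) \<Rightarrow> (int \<Rightarrow> real) \<Rightarrow> (real \<Rightarrow> (config \<Rightarrow> real) \<Rightarrow> config \<Rightarrow> real) \<Rightarrow> bool" where
  "markov_semigroup_gen \<theta> p q S \<longleftrightarrow>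
     (\<forall>t\<ge>0. \<forall>F. continuous_on UNIV F \<longrightarrow> continuous_on UNIV (S t F)) \<and>
     (\<forall>F. continuous_on UNIV F \<longrightarrow> S 0 F = F) \<and>
     (\<forall>s\<ge>0. \<forall>t\<ge>0. \<forall>F. continuous_on UNIV F \<longrightarrow> S (s + t) F = S s (S t F)) \<and>
     (\<forall>t\<ge>0. \<forall>F G a b. continuous_on UNIV F \<longrightarrow> continuous_on UNIV G \<longrightarrow>
         S t (\<lambda>\<eta>. a * F \<eta> + b * G \<eta>) = (\<lambda>\<eta>. a * S t F \<eta> + b * S t G \<eta>)) \<and>
     (\<forall>t\<ge>0. \<forall>F. continuous_on UNIV F \<longrightarrow> (\<forall>\<eta>. F \<eta> \<ge> 0) \<longrightarrow> (\<forall>\<eta>. S t F \<eta> \<ge> 0)) \<and>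
     (\<forall>t\<ge>0. S t (\<lambda>_. 1) = (\<lambda>_. 1)) \<and>
     (\<forall>F. continuous_on UNIV F \<longrightarrow>
         (\<forall>\<epsilon>>0. \<exists>\<delta>>0. \<forall>t. 0 < t \<and> t < \<delta> \<longrightarrow> (\<forall>\<eta>. \<bar>S t F \<eta> - F \<eta>\<bar> < \<epsilon>))) \<and>
     (\<forall>F. local_fun F \<longrightarrow>
         (\<forall>\<epsilon>>0. \<exists>\<delta>>0. \<forall>t. 0 < t \<and> t < \<delta> \<longrightarrow>
            (\<forall>\<eta>. \<bar>(S t F \<eta> - F \<eta>) / t - gen \<theta> p q F \<eta>\<bar> < \<epsilon>)))"

text \<open>eta[y,z) and sigma_{y,z}(eta) = (-theta)^{eta[y,z)} (with 0^0 = 1).\<close>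
definition count_int :: "config \<Rightarrow> int \<Rightarrow> int \<Rightarrow> nat" where
  "count_int \<eta> y z = card {x. y \<le> x \<and> x < z \<and> \<eta> x}"

definition sigma :: "real \<Rightarrow> int \<Rightarrow> int \<Rightarrow> config \<Rightarrow> real" where
  "sigma \<theta> y z \<eta> = (- \<theta>) ^ count_int \<eta> y z"

text \<open>Sigma_y(eta) = prod_{i=1}^n sigma_{y_{2i-1},y_{2i}}(eta); indices shifted to 0..2n-1.\<close>
definition Sigma_prod :: "real \<Rightarrow> nat \<Rightarrow> (nat \<Rightarrow> int) \<Rightarrow> config \<Rightarrow> real" where
  "Sigma_prod \<theta> n y \<eta> = (\<Prod>i<n. sigma \<theta> (y (2 * i)) (y (2 * i + 1)) \<eta>)"

definition pfaffian :: "nat \<Rightarrow> (nat \<Rightarrow> nat \<Rightarrow> real) \<Rightarrow> real" where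
  "pfaffian n A = (1 / (2 ^ n * fact n)) *
     (\<Sum>\<pi> | \<pi> permutes {0..<2 * n}. of_int (sign \<pi>) * (\<Prod>i<n. A (\<pi> (2 * i)) (\<pi> (2 * i + 1))))"

end

theory Submission
  imports Defs
begin

text \<open>
  Both sides of the identity, as functions of \<open>t\<close> and of the sorted endpoint vector \<open>y\<close>, solve
  the same backward equation: for strictly increasing \<open>y\<close> the generator acts on \<open>\<Sigma>\<^sub>y\<close> by moving a
  single endpoint \<open>y\<^sub>k\<close> to \<open>y\<^sub>k + 1\<close> at rate \<open>q(y\<^sub>k)\<close> or to \<open>y\<^sub>k - 1\<close> at rate \<open>p(y\<^sub>k)\<close>, because
  annihilation and coalescence have the same average effect on \<open>(-\<theta>)\<^bsup>\<eta>[y,z)\<^esup>\<close>.  Each entry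
  \<open>K\<^sub>t(y\<^sub>i, y\<^sub>j)\<close> is the case \<open>n = 1\<close>, and the Pfaffian is multilinear in row-column pairs, so
  the Pfaffian solves the same equation.  Where two endpoints coincide both sides drop to the
  case \<open>n - 1\<close> (an empty interval, resp. two equal rows with \<open>K\<^sub>t(y, y) = 1\<close>), which is the
  induction hypothesis; at \<open>t = 0\<close> the identity is an elementary Pfaffian computation.
  Finally, bounded solutions of the backward equation with bounded rates are determined by
  their initial and boundary values.
\<close>

section \<open>Pfaffians\<close>

definition pfaffian_term :: "nat \<Rightarrow> (nat \<Rightarrow> nat \<Rightarrow> real) \<Rightarrow> (nat \<Rightarrow> nat) \<Rightarrow> real" where
  "pfaffian_term n A \<pi> = of_int (sign \<pi>) * (\<Prod>i<n. A (\<pi> (2 * i)) (\<pi> (2 * i + 1)))"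

definition pfaffian_sum :: "nat \<Rightarrow> (nat \<Rightarrow> nat \<Rightarrow> real) \<Rightarrow> real" where
  "pfaffian_sum n A = (\<Sum>\<pi> | \<pi> permutes {0..<2 * n}. pfaffian_term n A \<pi>)"

lemma pfaffian_eq_pfaffian_sum: "pfaffian n A = pfaffian_sum n A / (2 ^ n * fact n)"
  by (simp add: pfaffian_def pfaffian_sum_def pfaffian_term_def)

lemma pfaffian_0 [simp]: "pfaffian 0 A = 1"
proof -
  have "{\<pi>. \<pi> permutes ({} :: nat set)} = {id}"
    by (auto simp: permutes_empty)
  then show ?thesis
    by (simp add: pfaffian_def)
qed

lemma pfaffian_term_compose:
  assumes "\<rho> permutes {0..<2 * n}" "\<pi> permutes {0..<2 * n}"
  shows "pfaffian_term n A (\<rho> \<circ> \<pi>) = of_int (sign \<rho>) * pfaffian_term n (\<lambda>i j. A (\<rho> i) (\<rho> j)) \<pi>"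
proof -
  have "sign (\<rho> \<circ> \<pi>) = sign \<rho> * sign \<pi>"
    using assms by (simp add: sign_compose permutes_imp_permutation[OF finite_atLeastLessThan])
  then show ?thesis
    by (simp add: pfaffian_term_def)
qed

lemma pfaffian_sum_permute:
  assumes \<rho>: "\<rho> permutes {0..<2 * n}"
  shows "pfaffian_sum n (\<lambda>i j. A (\<rho> i) (\<rho> j)) = of_int (sign \<rho>) * pfaffian_sum n A"
proof -
  have "pfaffian_sum n A = (\<Sum>\<pi> | \<pi> permutes {0..<2 * n}. pfaffian_term n A (\<rho> \<circ> \<pi>))"
    unfolding pfaffian_sum_def
    by (rule sum.reindex_bij_witness[where i = "(\<circ>) \<rho>" and j = "(\<circ>) (inv \<rho>)"])
       (use \<rho> in \<open>auto simp: o_assoc permutes_inv_o permutes_compose permutes_inv\<close>)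
  also have "\<dots> = of_int (sign \<rho>) * pfaffian_sum n (\<lambda>i j. A (\<rho> i) (\<rho> j))"
    by (simp add: pfaffian_sum_def pfaffian_term_compose[OF \<rho>] sum_distrib_left)
  finally show ?thesis
    by (simp flip: of_int_mult add: mult.assoc)
qed

lemma sum_eq_0_by_involution:
  fixes f :: "'a \<Rightarrow> real"
  assumes "\<And>x. x \<in> X \<Longrightarrow> g x \<in> X" "\<And>x. x \<in> X \<Longrightarrow> g (g x) = x"
    and "\<And>x. x \<in> X \<Longrightarrow> f (g x) = - f x"
  shows "sum f X = 0"
proof -
  have "sum f X = sum (\<lambda>x. - f x) X"
    by (rule sum.reindex_bij_witness[where i = g and j = g]) (use assms in auto)
  then show ?thesis
    by (simp add: sum_negf)
qed

definition perms_pairing :: "nat \<Rightarrow> nat \<Rightarrow> nat \<Rightarrow> nat \<Rightarrow> (nat \<Rightarrow> nat) set" where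
  "perms_pairing n i a b = {\<pi>. \<pi> permutes {0..<2 * n} \<and> \<pi> (2 * i) = a \<and> \<pi> (2 * i + 1) = b}"

lemma transpose_01_entry:
  fixes A :: "nat \<Rightarrow> nat \<Rightarrow> 'a"
  assumes rows: "\<And>a. 2 \<le> a \<Longrightarrow> a < N \<Longrightarrow> A 0 a = A 1 a \<and> A a 0 = A a 1"
    and "a < N" "b < N" "a \<noteq> b" "\<not> (a = 0 \<and> b = 1)" "\<not> (a = 1 \<and> b = 0)"
  shows "A (Transposition.transpose 0 1 a) (Transposition.transpose 0 1 b) = A a b"
proof -
  consider "2 \<le> a" "2 \<le> b" | "a \<in> {0, 1}" "2 \<le> b" | "2 \<le> a" "b \<in> {0, 1}"
    using assms(4-6) by fastforce
  then show ?thesis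
    by cases (use assms(2,3) rows[of a] rows[of b] in \<open>auto simp: Transposition.transpose_def\<close>)
qed

lemma pfaffian_sum_unpaired_eq_0:
  assumes rows: "\<And>a. 2 \<le> a \<Longrightarrow> a < 2 * n \<Longrightarrow> A 0 a = A 1 a \<and> A a 0 = A a 1" and "0 < n"
  shows "(\<Sum>\<pi> \<in> {\<pi>. \<pi> permutes {0..<2 * n}} - (\<Union>i<n. perms_pairing n i 0 1 \<union> perms_pairing n i 1 0).
           pfaffian_term n A \<pi>) = 0"
proof (rule sum_eq_0_by_involution[where g = "\<lambda>\<pi>. Transposition.transpose 0 1 \<circ> \<pi>"])
  let ?\<tau> = "Transposition.transpose (0::nat) 1"
  have \<tau>: "?\<tau> permutes {0..<2 * n}"
    using \<open>0 < n\<close> by (intro permutes_swap_id) auto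
  fix \<pi> assume "\<pi> \<in> {\<pi>. \<pi> permutes {0..<2 * n}} - (\<Union>i<n. perms_pairing n i 0 1 \<union> perms_pairing n i 1 0)"
  then have \<pi>: "\<pi> permutes {0..<2 * n}"
    and unpaired: "\<And>i. i < n \<Longrightarrow> \<not> (\<pi> (2 * i) = 0 \<and> \<pi> (2 * i + 1) = 1)"
      "\<And>i. i < n \<Longrightarrow> \<not> (\<pi> (2 * i) = 1 \<and> \<pi> (2 * i + 1) = 0)"
    by (auto simp: perms_pairing_def)
  show "?\<tau> \<circ> \<pi> \<in> {\<pi>. \<pi> permutes {0..<2 * n}} - (\<Union>i<n. perms_pairing n i 0 1 \<union> perms_pairing n i 1 0)"
    using permutes_compose[OF \<pi> \<tau>] unpaired by (fastforce simp: perms_pairing_def transpose_eq_iff)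
  show "?\<tau> \<circ> (?\<tau> \<circ> \<pi>) = \<pi>"
    by (simp add: fun_eq_iff)
  have "A (?\<tau> (\<pi> (2 * i))) (?\<tau> (\<pi> (2 * i + 1))) = A (\<pi> (2 * i)) (\<pi> (2 * i + 1))" if "i < n" for i
  proof (rule transpose_01_entry[where N = "2 * n", OF rows])
    show "\<pi> (2 * i) < 2 * n" "\<pi> (2 * i + 1) < 2 * n"
      using permutes_in_image[OF \<pi>, of "2 * i"] permutes_in_image[OF \<pi>, of "2 * i + 1"] that by auto
    show "\<pi> (2 * i) \<noteq> \<pi> (2 * i + 1)"
      using permutes_inj[OF \<pi>] by (simp add: inj_eq)
  qed (use unpaired that in auto)
  then have "pfaffian_term n (\<lambda>a b. A (?\<tau> a) (?\<tau> b)) \<pi> = pfaffian_term n A \<pi>"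
    by (simp add: pfaffian_term_def)
  then show "pfaffian_term n A (?\<tau> \<circ> \<pi>) = - pfaffian_term n A \<pi>"
    by (subst pfaffian_term_compose[OF \<tau> \<pi>]) (simp add: sign_swap_id)
qed

lemma pfaffian_sum_pairing_flip:
  assumes anti: "A b a = - A a b" and i: "i < n"
  shows "(\<Sum>\<pi>\<in>perms_pairing n i b a. pfaffian_term n A \<pi>) = (\<Sum>\<pi>\<in>perms_pairing n i a b. pfaffian_term n A \<pi>)"
proof -
  let ?\<tau> = "Transposition.transpose (2 * i) (2 * i + 1)"
  have \<tau>: "?\<tau> permutes {0..<2 * n}"
    using i by (intro permutes_swap_id) auto
  show ?thesis
  proof (rule sum.reindex_bij_witness[where i = "\<lambda>\<pi>. \<pi> \<circ> ?\<tau>" and j = "\<lambda>\<pi>. \<pi> \<circ> ?\<tau>"])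
    fix \<pi> assume "\<pi> \<in> perms_pairing n i b a"
    then have \<pi>: "\<pi> permutes {0..<2 * n}" "\<pi> (2 * i) = b" "\<pi> (2 * i + 1) = a"
      by (auto simp: perms_pairing_def)
    show "\<pi> \<circ> ?\<tau> \<circ> ?\<tau> = \<pi>" "\<pi> \<circ> ?\<tau> \<in> perms_pairing n i a b"
      using \<pi> permutes_compose[OF \<tau> \<pi>(1)] by (auto simp: perms_pairing_def fun_eq_iff)
    have sign: "sign (\<pi> \<circ> ?\<tau>) = - sign \<pi>"
      using sign_compose[OF permutes_imp_permutation[OF finite_atLeastLessThan \<pi>(1)] permutation_swap_id]
      by (simp add: sign_swap_id)
    have other: "A ((\<pi> \<circ> ?\<tau>) (2 * j)) ((\<pi> \<circ> ?\<tau>) (2 * j + 1)) = A (\<pi> (2 * j)) (\<pi> (2 * j + 1))"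
      if "j \<noteq> i" for j
      using that by simp
    have "(\<Prod>j<n. A ((\<pi> \<circ> ?\<tau>) (2 * j)) ((\<pi> \<circ> ?\<tau>) (2 * j + 1)))
        = A a b * (\<Prod>j\<in>{..<n} - {i}. A (\<pi> (2 * j)) (\<pi> (2 * j + 1)))"
      using i \<pi> other by (simp add: prod.remove)
    also have "\<dots> = - (\<Prod>j<n. A (\<pi> (2 * j)) (\<pi> (2 * j + 1)))"
      using i \<pi> anti by (simp add: prod.remove)
    finally show "pfaffian_term n A (\<pi> \<circ> ?\<tau>) = pfaffian_term n A \<pi>"
      unfolding pfaffian_term_def sign by simp
  next
    fix \<pi> assume "\<pi> \<in> perms_pairing n i a b"
    then show "\<pi> \<circ> ?\<tau> \<circ> ?\<tau> = \<pi>" "\<pi> \<circ> ?\<tau> \<in> perms_pairing n i b a"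
      using permutes_compose[OF \<tau>] by (auto simp: perms_pairing_def fun_eq_iff)
  qed
qed

lemma pfaffian_sum_pairing_slot:
  assumes i: "i < n"
  shows "(\<Sum>\<pi>\<in>perms_pairing n i a b. pfaffian_term n A \<pi>) = (\<Sum>\<pi>\<in>perms_pairing n 0 a b. pfaffian_term n A \<pi>)"
proof (cases "i = 0")
  case False
  define \<rho> where "\<rho> = Transposition.transpose 0 (2 * i) \<circ> Transposition.transpose 1 (2 * i + 1)"
  have \<rho>_pair: "\<rho> (2 * j) = 2 * Transposition.transpose 0 i j"
    "\<rho> (2 * j + 1) = 2 * Transposition.transpose 0 i j + 1" for j
    using False by (auto simp: \<rho>_def Transposition.transpose_def)
  have \<rho>_\<rho>: "\<rho> (\<rho> x) = x" for x
    using False by (auto simp: \<rho>_def Transposition.transpose_def)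
  have \<rho>: "\<rho> permutes {0..<2 * n}"
    unfolding \<rho>_def using i by (intro permutes_compose permutes_swap_id) auto
  have sign_\<rho>: "sign \<rho> = 1"
    unfolding \<rho>_def using False by (simp add: sign_compose permutation_swap_id sign_swap_id)
  have slots: "bij_betw (Transposition.transpose 0 i) {..<n} {..<n}"
    using i by (intro permutes_imp_bij permutes_swap_id) auto
  show ?thesis
  proof (rule sum.reindex_bij_witness[where i = "\<lambda>\<pi>. \<pi> \<circ> \<rho>" and j = "\<lambda>\<pi>. \<pi> \<circ> \<rho>"])
    fix \<pi> assume "\<pi> \<in> perms_pairing n i a b"
    then have \<pi>: "\<pi> permutes {0..<2 * n}" "\<pi> (2 * i) = a" "\<pi> (2 * i + 1) = b"
      by (auto simp: perms_pairing_def)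
    show "\<pi> \<circ> \<rho> \<circ> \<rho> = \<pi>"
      by (simp add: fun_eq_iff \<rho>_\<rho>)
    show "\<pi> \<circ> \<rho> \<in> perms_pairing n 0 a b"
      using \<pi> \<rho>_pair[of 0] permutes_compose[OF \<rho> \<pi>(1)] by (simp add: perms_pairing_def)
    have "sign (\<pi> \<circ> \<rho>) = sign \<pi>"
      using sign_compose[OF permutes_imp_permutation[OF finite_atLeastLessThan \<pi>(1)]
          permutes_imp_permutation[OF finite_atLeastLessThan \<rho>]] sign_\<rho> by simp
    moreover have "(\<Prod>j<n. A ((\<pi> \<circ> \<rho>) (2 * j)) ((\<pi> \<circ> \<rho>) (2 * j + 1)))
        = (\<Prod>j<n. A (\<pi> (2 * j)) (\<pi> (2 * j + 1)))"
      unfolding o_apply \<rho>_pair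
      by (rule prod.reindex_bij_betw[OF slots, where g = "\<lambda>j. A (\<pi> (2 * j)) (\<pi> (2 * j + 1))"])
    ultimately show "pfaffian_term n A (\<pi> \<circ> \<rho>) = pfaffian_term n A \<pi>"
      by (simp add: pfaffian_term_def)
  next
    fix \<pi> assume "\<pi> \<in> perms_pairing n 0 a b"
    then show "\<pi> \<circ> \<rho> \<circ> \<rho> = \<pi>" "\<pi> \<circ> \<rho> \<in> perms_pairing n i a b"
      using \<rho>_pair[of i] permutes_compose[OF \<rho>]
      by (auto simp: perms_pairing_def fun_eq_iff \<rho>_\<rho>)
  qed
qed simp

lemma bij_betw_add_atLeastLessThan: "bij_betw (\<lambda>x::nat. x + c) {0..<N} {c..<N + c}"
  by (rule bij_betw_byWitness[where f' = "\<lambda>x. x - c"]) auto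

lemma map_permutation_add:
  fixes \<sigma> :: "nat \<Rightarrow> nat"
  assumes \<sigma>: "\<sigma> permutes {0..<N}"
  shows map_permutation_add_permutes: "map_permutation {0..<N} (\<lambda>x. x + c) \<sigma> permutes {c..<N + c}"
    and map_permutation_add_apply: "map_permutation {0..<N} (\<lambda>x. x + c) \<sigma> (x + c) = \<sigma> x + c"
proof -
  show shifted: "map_permutation {0..<N} (\<lambda>x. x + c) \<sigma> permutes {c..<N + c}"
    by (rule map_permutation_permutes[OF bij_betw_add_atLeastLessThan \<sigma>])
  show "map_permutation {0..<N} (\<lambda>x. x + c) \<sigma> (x + c) = \<sigma> x + c"
  proof (cases "x < N")
    case True
    then show ?thesis
      by (intro map_permutation_apply) (auto simp: inj_on_def)
  next
    case False
    then show ?thesis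
      using permutes_not_in[OF \<sigma>, of x] permutes_not_in[OF shifted, of "x + c"] by simp
  qed
qed

lemma pfaffian_sum_pairing_first:
  "(\<Sum>\<pi>\<in>perms_pairing (Suc m) 0 0 1. pfaffian_term (Suc m) A \<pi>)
     = A 0 1 * pfaffian_sum m (\<lambda>i j. A (i + 2) (j + 2))"
proof -
  let ?shift = "map_permutation {0..<2 * m} (\<lambda>x. x + 2)"
  let ?unshift = "map_permutation {2..<2 * m + 2} (\<lambda>x. x - 2)"
  have bij_unshift: "bij_betw (\<lambda>x::nat. x - 2) {2..<2 * m + 2} {0..<2 * m}"
    by (rule bij_betw_byWitness[where f' = "\<lambda>x. x + 2"]) auto
  have "A 0 1 * pfaffian_sum m (\<lambda>i j. A (i + 2) (j + 2))
      = (\<Sum>\<sigma> | \<sigma> permutes {0..<2 * m}. A 0 1 * pfaffian_term m (\<lambda>i j. A (i + 2) (j + 2)) \<sigma>)"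
    by (simp add: pfaffian_sum_def sum_distrib_left)
  also have "\<dots> = (\<Sum>\<pi>\<in>perms_pairing (Suc m) 0 0 1. pfaffian_term (Suc m) A \<pi>)"
  proof (rule sum.reindex_bij_witness[where i = ?unshift and j = ?shift])
    fix \<sigma> assume "\<sigma> \<in> {\<sigma>. \<sigma> permutes {0..<2 * m}}"
    then have \<sigma>: "\<sigma> permutes {0..<2 * m}" by simp
    show "?unshift (?shift \<sigma>) = \<sigma>"
      by (rule map_permutation_compose_inv[OF bij_betw_add_atLeastLessThan \<sigma>]) simp
    show "?shift \<sigma> \<in> perms_pairing (Suc m) 0 0 1"
      using permutes_subset[OF map_permutation_add_permutes[OF \<sigma>, of 2]]
        permutes_not_in[OF map_permutation_add_permutes[OF \<sigma>, of 2], of 0] permutes_not_in[OF map_permutation_add_permutes[OF \<sigma>, of 2], of 1]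
      by (auto simp: perms_pairing_def)
    have "sign (?shift \<sigma>) = sign \<sigma>"
      by (rule sign_map_permutation[OF _ \<sigma>]) (auto simp: inj_on_def)
    moreover have "(\<Prod>i<Suc m. A (?shift \<sigma> (2 * i)) (?shift \<sigma> (2 * i + 1)))
        = A 0 1 * (\<Prod>i<m. A (\<sigma> (2 * i) + 2) (\<sigma> (2 * i + 1) + 2))"
      using map_permutation_add_apply[OF \<sigma>, of 2 "2 * _"] map_permutation_add_apply[OF \<sigma>, of 2 "2 * _ + 1"]
        permutes_not_in[OF map_permutation_add_permutes[OF \<sigma>, of 2], of 0] permutes_not_in[OF map_permutation_add_permutes[OF \<sigma>, of 2], of 1]
      by (subst prod.lessThan_Suc_shift) simp
    ultimately show "pfaffian_term (Suc m) A (?shift \<sigma>) = A 0 1 * pfaffian_term m (\<lambda>i j. A (i + 2) (j + 2)) \<sigma>"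
      by (simp add: pfaffian_term_def)
  next
    fix \<pi> assume "\<pi> \<in> perms_pairing (Suc m) 0 0 1"
    then have \<pi>: "\<pi> permutes {0..<2 * Suc m}" "\<pi> 0 = 0" "\<pi> 1 = 1"
      by (auto simp: perms_pairing_def)
    have \<pi>': "\<pi> permutes {2..<2 * m + 2}"
      by (rule permutes_superset[OF \<pi>(1)]) (use \<pi> in \<open>auto simp: not_le less_2_cases_iff\<close>)
    show "?shift (?unshift \<pi>) = \<pi>"
      by (rule map_permutation_compose_inv[OF bij_unshift \<pi>']) auto
    show "?unshift \<pi> \<in> {\<sigma>. \<sigma> permutes {0..<2 * m}}"
      using map_permutation_permutes[OF bij_unshift \<pi>'] by simp
  qed
  finally show ?thesis ..
qed

lemma perms_pairing_01_disjoint: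
  assumes "i \<noteq> j"
  shows "(perms_pairing n i 0 1 \<union> perms_pairing n i 1 0) \<inter> (perms_pairing n j 0 1 \<union> perms_pairing n j 1 0) = {}"
proof (rule ccontr)
  assume "\<not> ?thesis"
  then obtain \<pi> where "\<pi> \<in> perms_pairing n i 0 1 \<union> perms_pairing n i 1 0"
    "\<pi> \<in> perms_pairing n j 0 1 \<union> perms_pairing n j 1 0"
    by blast
  then have \<pi>: "\<pi> permutes {0..<2 * n}"
    and in01: "\<pi> (2 * i) \<in> {0, 1}" "\<pi> (2 * i + 1) \<in> {0, 1}" "\<pi> (2 * j) \<in> {0, 1}"
    and "\<pi> (2 * i) \<noteq> \<pi> (2 * i + 1)"
    by (auto simp: perms_pairing_def)
  then have "\<pi> (2 * j) = \<pi> (2 * i) \<or> \<pi> (2 * j) = \<pi> (2 * i + 1)"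
    by auto
  then show False
    using permutes_inj[OF \<pi>] \<open>i \<noteq> j\<close> by (auto simp: inj_eq)
qed

(* Terms that do not pair 0 with 1 cancel under the transposition of 0 and 1; each of the
   remaining 2n classes of terms contributes A 0 1 times the Pfaffian sum of the minor. *)
lemma pfaffian_sum_reduce_first:
  fixes A :: "nat \<Rightarrow> nat \<Rightarrow> real"
  assumes rows: "\<And>a. 2 \<le> a \<Longrightarrow> a < 2 * Suc m \<Longrightarrow> A 0 a = A 1 a \<and> A a 0 = A a 1"
    and anti: "A 1 0 = - A 0 1"
  shows "pfaffian_sum (Suc m) A = 2 * real (Suc m) * (A 0 1 * pfaffian_sum m (\<lambda>i j. A (i + 2) (j + 2)))"
proof -
  define n where "n = Suc m"
  define P where "P = {\<pi>. \<pi> permutes {0..<2 * n}}"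
  define Q where "Q i = perms_pairing n i 0 1 \<union> perms_pairing n i 1 0" for i
  let ?f = "pfaffian_term n A"
  have fin_P: "finite P"
    unfolding P_def by (rule finite_permutations) simp
  have Q_P: "Q i \<subseteq> P" for i
    by (auto simp: Q_def P_def perms_pairing_def)
  have sum_Q: "sum ?f (Q i) = 2 * (A 0 1 * pfaffian_sum m (\<lambda>i j. A (i + 2) (j + 2)))" if "i < n" for i
  proof -
    have "sum ?f (Q i) = sum ?f (perms_pairing n i 0 1) + sum ?f (perms_pairing n i 1 0)"
      unfolding Q_def using Q_P[of i] fin_P
      by (intro sum.union_disjoint) (auto simp: Q_def perms_pairing_def intro: finite_subset)
    also have "\<dots> = 2 * sum ?f (perms_pairing n 0 0 1)"
      using pfaffian_sum_pairing_flip[where A = A and a = 0 and b = 1, OF anti that]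
        pfaffian_sum_pairing_slot[OF that] by simp
    finally show ?thesis
      using pfaffian_sum_pairing_first[of m A] by (simp add: n_def)
  qed
  have "pfaffian_sum n A = sum ?f (P - (\<Union>i<n. Q i)) + sum ?f (\<Union>i<n. Q i)"
    unfolding pfaffian_sum_def P_def[symmetric] using Q_P fin_P by (intro sum.subset_diff) auto
  also have "sum ?f (P - (\<Union>i<n. Q i)) = 0"
    unfolding P_def Q_def by (rule pfaffian_sum_unpaired_eq_0) (use rows in \<open>auto simp: n_def\<close>)
  also have "sum ?f (\<Union>i<n. Q i) = (\<Sum>i<n. sum ?f (Q i))"
    using Q_P fin_P perms_pairing_01_disjoint
    by (intro sum.UNION_disjoint) (auto simp: Q_def intro: finite_subset)
  also have "\<dots> = (\<Sum>i<n. 2 * (A 0 1 * pfaffian_sum m (\<lambda>i j. A (i + 2) (j + 2))))"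
    by (rule sum.cong) (simp_all add: sum_Q)
  finally show ?thesis
    by (simp add: n_def)
qed

lemma pfaffian_reduce_first:
  fixes A :: "nat \<Rightarrow> nat \<Rightarrow> real"
  assumes rows: "\<And>a. 2 \<le> a \<Longrightarrow> a < 2 * Suc m \<Longrightarrow> A 0 a = A 1 a \<and> A a 0 = A a 1"
    and anti: "A 1 0 = - A 0 1"
  shows "pfaffian (Suc m) A = A 0 1 * pfaffian m (\<lambda>i j. A (i + 2) (j + 2))"
proof -
  have sum_eq: "pfaffian_sum (Suc m) A = 2 * real (Suc m) * (A 0 1 * pfaffian_sum m (\<lambda>i j. A (i + 2) (j + 2)))"
    by (rule pfaffian_sum_reduce_first[OF assms])
  have fact_Suc: "(fact (Suc m) :: real) = real (Suc m) * fact m"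
    by simp
  have "pfaffian (Suc m) A = (2 * real (Suc m)) * (A 0 1 * pfaffian_sum m (\<lambda>i j. A (i + 2) (j + 2)))
      / ((2 * real (Suc m)) * (2 ^ m * fact m))"
    unfolding pfaffian_eq_pfaffian_sum sum_eq fact_Suc power_Suc by (simp only: mult_ac)
  also have "\<dots> = A 0 1 * pfaffian_sum m (\<lambda>i j. A (i + 2) (j + 2)) / (2 ^ m * fact m)"
    by (rule mult_divide_mult_cancel_left) simp
  finally show ?thesis
    by (simp add: pfaffian_eq_pfaffian_sum)
qed

definition skip_pair :: "nat \<Rightarrow> nat \<Rightarrow> nat" where
  "skip_pair k i = (if i < k then i else i + 2)"

lemma skip_pair_less_iff [simp]: "skip_pair k i < skip_pair k j \<longleftrightarrow> i < j"
  by (auto simp: skip_pair_def)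

lemma pfaffian_reduce_adjacent:
  fixes A :: "nat \<Rightarrow> nat \<Rightarrow> real"
  assumes "k + 1 < 2 * Suc m"
    and rows: "\<And>a. a < 2 * Suc m \<Longrightarrow> a \<noteq> k \<Longrightarrow> a \<noteq> k + 1 \<Longrightarrow> A k a = A (k + 1) a \<and> A a k = A a (k + 1)"
    and anti: "A (k + 1) k = - A k (k + 1)"
  shows "pfaffian (Suc m) A = A k (k + 1) * pfaffian m (\<lambda>i j. A (skip_pair k i) (skip_pair k j))"
  using assms
proof (induction k arbitrary: A)
  case 0
  then have "pfaffian (Suc m) A = A 0 1 * pfaffian m (\<lambda>i j. A (i + 2) (j + 2))"
    by (intro pfaffian_reduce_first) auto
  then show ?case
    by (simp add: skip_pair_def)
next
  case (Suc k)
  define \<rho> where "\<rho> = Transposition.transpose k (k + 1) \<circ> Transposition.transpose (k + 1) (k + 2)"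
  have \<rho>_apply: "\<rho> k = k + 1" "\<rho> (k + 1) = k + 2" "\<rho> (k + 2) = k"
    "\<And>a. a \<noteq> k \<Longrightarrow> a \<noteq> k + 1 \<Longrightarrow> a \<noteq> k + 2 \<Longrightarrow> \<rho> a = a"
    by (auto simp: \<rho>_def Transposition.transpose_def)
  have \<rho>: "\<rho> permutes {0..<2 * Suc m}"
    unfolding \<rho>_def using Suc.prems(1) by (intro permutes_compose permutes_swap_id) auto
  have "sign \<rho> = 1"
    by (simp add: \<rho>_def sign_compose permutation_swap_id sign_swap_id)
  define B where "B i j = A (\<rho> i) (\<rho> j)" for i j
  have "pfaffian (Suc m) A = pfaffian (Suc m) B"
    unfolding pfaffian_eq_pfaffian_sum B_def pfaffian_sum_permute[OF \<rho>] \<open>sign \<rho> = 1\<close> by simp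
  also have "\<dots> = B k (k + 1) * pfaffian m (\<lambda>i j. B (skip_pair k i) (skip_pair k j))"
  proof (rule Suc.IH)
    show "k + 1 < 2 * Suc m"
      using Suc.prems(1) by simp
    show "B (k + 1) k = - B k (k + 1)"
      unfolding B_def \<rho>_apply using Suc.prems(3) by simp
    fix a assume a: "a < 2 * Suc m" "a \<noteq> k" "a \<noteq> k + 1"
    show "B k a = B (k + 1) a \<and> B a k = B a (k + 1)"
    proof (cases "a = k + 2")
      case True
      then show ?thesis
        unfolding B_def using \<rho>_apply Suc.prems(1) Suc.prems(2)[of k] by simp
    next
      case False
      then show ?thesis
        unfolding B_def \<rho>_apply(1,2) \<rho>_apply(4)[OF a(2,3) False] using Suc.prems(2)[of a] a by simp
    qed
  qed
  also have "\<rho> (skip_pair k i) = skip_pair (Suc k) i" for i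
    using \<rho>_apply by (cases "i < k"; cases "i = k") (auto simp: skip_pair_def)
  then have "(\<lambda>i j. B (skip_pair k i) (skip_pair k j)) = (\<lambda>i j. A (skip_pair (Suc k) i) (skip_pair (Suc k) j))"
    by (simp add: B_def)
  finally show ?case
    using \<rho>_apply(1,2) by (simp add: B_def)
qed

lemma permutes_pair_slot_exists:
  fixes \<pi> :: "nat \<Rightarrow> nat"
  assumes "\<pi> permutes {0..<2 * n}" "k < 2 * n"
  obtains j where "j < n" "k = \<pi> (2 * j) \<or> k = \<pi> (2 * j + 1)"
proof -
  have "k \<in> \<pi> ` {0..<2 * n}"
    using permutes_image[OF assms(1)] assms(2) by simp
  then obtain x where x: "x < 2 * n" "\<pi> x = k"
    by auto
  have "x = 2 * (x div 2) \<or> x = 2 * (x div 2) + 1"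
    by presburger
  then show ?thesis
    using that[of "x div 2"] x by auto
qed

lemma permutes_pair_slot_unique:
  fixes \<pi> :: "nat \<Rightarrow> nat"
  assumes "\<pi> permutes {0..<2 * n}"
    and "k = \<pi> (2 * j) \<or> k = \<pi> (2 * j + 1)" "k = \<pi> (2 * j') \<or> k = \<pi> (2 * j' + 1)"
  shows "j = j'"
proof -
  have inj: "\<pi> a = \<pi> b \<longleftrightarrow> a = b" for a b
    using permutes_inj[OF assms(1)] by (simp add: inj_eq)
  from assms(2,3) have "2 * j = 2 * j' \<or> 2 * j = 2 * j' + 1 \<or> 2 * j + 1 = 2 * j' \<or> 2 * j + 1 = 2 * j' + 1"
    by (auto simp: inj)
  then show ?thesis
    by presburger
qed

lemma pfaffian_scale_row:
  fixes A B :: "nat \<Rightarrow> nat \<Rightarrow> real"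
  assumes "k < 2 * n"
    and scaled: "\<And>a. a < 2 * n \<Longrightarrow> B k a = c * A k a" "\<And>a. a < 2 * n \<Longrightarrow> B a k = c * A a k"
    and other: "\<And>a b. a < 2 * n \<Longrightarrow> b < 2 * n \<Longrightarrow> a \<noteq> k \<Longrightarrow> b \<noteq> k \<Longrightarrow> B a b = A a b"
  shows "pfaffian n B = c * pfaffian n A"
proof -
  have "pfaffian_term n B \<pi> = c * pfaffian_term n A \<pi>" if \<pi>: "\<pi> permutes {0..<2 * n}" for \<pi>
  proof -
    obtain j0 where j0: "j0 < n" "k = \<pi> (2 * j0) \<or> k = \<pi> (2 * j0 + 1)"
      using permutes_pair_slot_exists[OF \<pi> \<open>k < 2 * n\<close>] by blast
    have less: "\<pi> (2 * j) < 2 * n" "\<pi> (2 * j + 1) < 2 * n" if "j < n" for j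
      using permutes_in_image[OF \<pi>, of "2 * j"] permutes_in_image[OF \<pi>, of "2 * j + 1"] that by auto
    have "B (\<pi> (2 * j)) (\<pi> (2 * j + 1)) = A (\<pi> (2 * j)) (\<pi> (2 * j + 1))" if "j < n" "j \<noteq> j0" for j
    proof -
      have "\<pi> (2 * j) \<noteq> k" "\<pi> (2 * j + 1) \<noteq> k"
        using permutes_pair_slot_unique[OF \<pi>, where j = j and j' = j0] j0(2) that(2) by auto
      then show ?thesis
        using other[OF less[OF that(1)]] by simp
    qed
    then have "(\<Prod>j\<in>{..<n} - {j0}. B (\<pi> (2 * j)) (\<pi> (2 * j + 1)))
        = (\<Prod>j\<in>{..<n} - {j0}. A (\<pi> (2 * j)) (\<pi> (2 * j + 1)))"
      by (intro prod.cong) auto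
    moreover have "B (\<pi> (2 * j0)) (\<pi> (2 * j0 + 1)) = c * A (\<pi> (2 * j0)) (\<pi> (2 * j0 + 1))"
      using j0(2) scaled less[OF j0(1)] by auto
    ultimately show ?thesis
      using j0(1) by (simp add: pfaffian_term_def prod.remove mult_ac)
  qed
  then show ?thesis
    by (simp add: pfaffian_eq_pfaffian_sum pfaffian_sum_def sum_distrib_left)
qed

lemma abs_pfaffian_le:
  assumes "\<And>a b. \<bar>A a b\<bar> \<le> 1"
  shows "\<bar>pfaffian n A\<bar> \<le> fact (2 * n)"
proof -
  have term_le: "\<bar>pfaffian_term n A \<pi>\<bar> \<le> 1" for \<pi>
  proof -
    have "\<bar>real_of_int (sign \<pi>)\<bar> = 1"
      by (simp add: sign_def)
    moreover have "(\<Prod>i<n. \<bar>A (\<pi> (2 * i)) (\<pi> (2 * i + 1))\<bar>) \<le> 1"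
      by (rule prod_le_1) (simp add: assms)
    ultimately show ?thesis
      by (simp add: pfaffian_term_def abs_mult abs_prod)
  qed
  have "\<bar>pfaffian_sum n A\<bar> \<le> (\<Sum>\<pi> | \<pi> permutes {0..<2 * n}. 1)"
    unfolding pfaffian_sum_def by (rule order_trans[OF sum_abs sum_mono]) (rule term_le)
  also have "\<dots> = fact (2 * n)"
    by (simp add: card_permutations)
  finally have sum_le: "\<bar>pfaffian_sum n A\<bar> \<le> fact (2 * n)" .
  have "(1::real) \<le> 2 ^ n * fact n"
    using mult_mono[OF one_le_power[of "2::real" n] fact_ge_1[of n]] by simp
  then have "\<bar>pfaffian n A\<bar> \<le> \<bar>pfaffian_sum n A\<bar>"
    by (simp add: pfaffian_eq_pfaffian_sum abs_divide divide_le_eq mult_le_cancel_left1)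
  with sum_le show ?thesis
    by linarith
qed

lemma continuous_on_pfaffian:
  assumes "\<And>a b. continuous_on T (\<lambda>t. M t a b)"
  shows "continuous_on T (\<lambda>t. pfaffian n (M t))"
  unfolding pfaffian_def by (intro continuous_intros assms)

lemma prod_diff_prod_single_change:
  fixes f g :: "'a \<Rightarrow> 'b::comm_ring_1"
  assumes "finite J" and single: "\<And>j j'. j \<in> J \<Longrightarrow> j' \<in> J \<Longrightarrow> f j \<noteq> g j \<Longrightarrow> f j' \<noteq> g j' \<Longrightarrow> j = j'"
  shows "prod g J - prod f J = (\<Sum>j\<in>J. (g j - f j) * (\<Prod>i\<in>J - {j}. f i))"
proof (cases "\<exists>j0\<in>J. f j0 \<noteq> g j0")
  case False
  then show ?thesis
    by (auto intro!: prod.cong sum.neutral)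
next
  case True
  then obtain j0 where j0: "j0 \<in> J" "f j0 \<noteq> g j0"
    by blast
  have same: "f j = g j" if "j \<in> J" "j \<noteq> j0" for j
    using single[OF that(1) j0(1)] j0(2) that(2) by blast
  have rest: "(\<Prod>i\<in>J - {j0}. g i) = (\<Prod>i\<in>J - {j0}. f i)"
    using same by (intro prod.cong) auto
  have "(\<Sum>j\<in>J. (g j - f j) * (\<Prod>i\<in>J - {j}. f i)) = (g j0 - f j0) * (\<Prod>i\<in>J - {j0}. f i)"
    using same by (subst sum.remove[OF \<open>finite J\<close> j0(1)]) (simp add: sum.neutral)
  also have "\<dots> = prod g J - prod f J"
    using rest by (simp add: prod.remove[OF \<open>finite J\<close> j0(1)] algebra_simps)
  finally show ?thesis ..
qed

(* Every term of the Pfaffian contains exactly one entry from row and column r k. *)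
lemma pfaffian_term_multilinear:
  assumes \<pi>: "\<pi> permutes {0..<2 * n}"
    and same: "\<And>k a b. k \<in> K \<Longrightarrow> a \<noteq> r k \<Longrightarrow> b \<noteq> r k \<Longrightarrow> N k a b = M a b"
  shows "of_int (sign \<pi>) * (\<Sum>j<n. (\<Sum>k\<in>K. c k * (N k (\<pi> (2 * j)) (\<pi> (2 * j + 1)) - M (\<pi> (2 * j)) (\<pi> (2 * j + 1))))
             * (\<Prod>i\<in>{..<n} - {j}. M (\<pi> (2 * i)) (\<pi> (2 * i + 1))))
       = (\<Sum>k\<in>K. c k * (pfaffian_term n (N k) \<pi> - pfaffian_term n M \<pi>))"
proof -
  define F where "F j = M (\<pi> (2 * j)) (\<pi> (2 * j + 1))" for j
  define G where "G k j = N k (\<pi> (2 * j)) (\<pi> (2 * j + 1))" for k j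
  have single_change: "prod (G k) {..<n} - prod F {..<n} = (\<Sum>j<n. (G k j - F j) * (\<Prod>i\<in>{..<n} - {j}. F i))"
    if "k \<in> K" for k
  proof (rule prod_diff_prod_single_change)
    have hit: "r k = \<pi> (2 * i) \<or> r k = \<pi> (2 * i + 1)" if "F i \<noteq> G k i" for i
      using same[OF \<open>k \<in> K\<close>, of "\<pi> (2 * i)" "\<pi> (2 * i + 1)"] that unfolding F_def G_def by metis
    fix j j' assume "F j \<noteq> G k j" "F j' \<noteq> G k j'"
    then show "j = j'"
      using permutes_pair_slot_unique[OF \<pi>] hit by blast
  qed simp
  have "(\<Sum>j<n. (\<Sum>k\<in>K. c k * (G k j - F j)) * (\<Prod>i\<in>{..<n} - {j}. F i))
      = (\<Sum>k\<in>K. c k * (\<Sum>j<n. (G k j - F j) * (\<Prod>i\<in>{..<n} - {j}. F i)))"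
    by (simp add: sum_distrib_left sum_distrib_right mult.assoc sum.swap[of _ K])
  also have "\<dots> = (\<Sum>k\<in>K. c k * (prod (G k) {..<n} - prod F {..<n}))"
    by (intro sum.cong refl) (simp add: single_change)
  finally show ?thesis
    by (simp add: pfaffian_term_def F_def G_def sum_distrib_left algebra_simps)
qed

lemma has_real_derivative_pfaffian:
  assumes entry: "\<And>a b. a < 2 * n \<Longrightarrow> b < 2 * n \<Longrightarrow> a \<noteq> b \<Longrightarrow>
      ((\<lambda>t. M t a b) has_real_derivative (\<Sum>k\<in>K. c k * (N k a b - M t0 a b))) (at t0)"
    and same: "\<And>k a b. k \<in> K \<Longrightarrow> a \<noteq> r k \<Longrightarrow> b \<noteq> r k \<Longrightarrow> N k a b = M t0 a b"
  shows "((\<lambda>t. pfaffian n (M t)) has_real_derivative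
      (\<Sum>k\<in>K. c k * (pfaffian n (N k) - pfaffian n (M t0)))) (at t0)"
proof -
  let ?P = "{\<pi>. \<pi> permutes {0..<2 * n}}"
  let ?D = "\<lambda>\<pi> j. \<Sum>k\<in>K. c k * (N k (\<pi> (2 * j)) (\<pi> (2 * j + 1)) - M t0 (\<pi> (2 * j)) (\<pi> (2 * j + 1)))"
  have term_deriv: "((\<lambda>t. pfaffian_term n (M t) \<pi>) has_real_derivative
      of_int (sign \<pi>) * (\<Sum>j<n. ?D \<pi> j * (\<Prod>i\<in>{..<n} - {j}. M t0 (\<pi> (2 * i)) (\<pi> (2 * i + 1))))) (at t0)"
    if "\<pi> \<in> ?P" for \<pi>
    unfolding pfaffian_term_def
  proof (intro DERIV_cmult has_field_derivative_prod)
    from that have \<pi>: "\<pi> permutes {0..<2 * n}"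
      by simp
    fix j assume "j \<in> {..<n}"
    then show "((\<lambda>t. M t (\<pi> (2 * j)) (\<pi> (2 * j + 1))) has_real_derivative ?D \<pi> j) (at t0)"
      using permutes_in_image[OF \<pi>, of "2 * j"] permutes_in_image[OF \<pi>, of "2 * j + 1"]
        permutes_inj[OF \<pi>] by (intro entry) (auto simp: inj_eq)
  qed
  have "((\<lambda>t. pfaffian_term n (M t) \<pi>) has_real_derivative
      (\<Sum>k\<in>K. c k * (pfaffian_term n (N k) \<pi> - pfaffian_term n (M t0) \<pi>))) (at t0)"
    if "\<pi> \<in> ?P" for \<pi>
    using term_deriv[OF that] pfaffian_term_multilinear[of \<pi> n K r N "M t0" c] that same by simp
  then have "((\<lambda>t. pfaffian_sum n (M t)) has_real_derivative
      (\<Sum>\<pi>\<in>?P. \<Sum>k\<in>K. c k * (pfaffian_term n (N k) \<pi> - pfaffian_term n (M t0) \<pi>))) (at t0)"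
    unfolding pfaffian_sum_def by (rule DERIV_sum)
  then have "((\<lambda>t. pfaffian_sum n (M t) / (2 ^ n * fact n)) has_real_derivative
      (\<Sum>\<pi>\<in>?P. \<Sum>k\<in>K. c k * (pfaffian_term n (N k) \<pi> - pfaffian_term n (M t0) \<pi>)) / (2 ^ n * fact n)) (at t0)"
    by (rule DERIV_cdivide)
  also have "(\<Sum>\<pi>\<in>?P. \<Sum>k\<in>K. c k * (pfaffian_term n (N k) \<pi> - pfaffian_term n (M t0) \<pi>))
      = (\<Sum>k\<in>K. c k * (pfaffian_sum n (N k) - pfaffian_sum n (M t0)))"
    by (subst sum.swap) (simp add: pfaffian_sum_def sum_distrib_left sum_subtractf right_diff_distrib)
  finally show ?thesis
    unfolding pfaffian_eq_pfaffian_sum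
    by (rule DERIV_cong) (simp add: sum_divide_distrib diff_divide_distrib flip: times_divide_eq_right)
qed

section \<open>The Markov semigroup\<close>

lemma continuous_on_local_fun:
  fixes F :: "config \<Rightarrow> real"
  assumes "local_fun F"
  shows "continuous_on UNIV F"
proof -
  obtain A where "finite A" and local: "\<And>\<eta> \<xi>. \<forall>x\<in>A. \<eta> x = \<xi> x \<Longrightarrow> F \<eta> = F \<xi>"
    using assms unfolding local_fun_def by blast
  have open_cylinder: "open {\<xi>::config. \<xi> x = b}" for x b
  proof -
    have "open ((\<lambda>\<xi>::config. \<xi> x) -` {b} \<inter> UNIV)"
      by (rule continuous_on_open_vimage[OF open_UNIV, THEN iffD1, rule_format])
         (simp_all add: open_discrete)
    then show ?thesis
      by (simp add: vimage_def)
  qed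
  show ?thesis
    unfolding continuous_on_topological
  proof (intro ballI allI impI)
    fix \<eta> :: config and B assume "open B" "F \<eta> \<in> B"
    show "\<exists>U. open U \<and> \<eta> \<in> U \<and> (\<forall>\<xi>\<in>UNIV. \<xi> \<in> U \<longrightarrow> F \<xi> \<in> B)"
    proof (intro exI conjI ballI impI)
      show "open (\<Inter>x\<in>A. {\<xi>. \<xi> x = \<eta> x})"
        using \<open>finite A\<close> open_cylinder by (intro open_INT) auto
      show "\<eta> \<in> (\<Inter>x\<in>A. {\<xi>. \<xi> x = \<eta> x})"
        by simp
      fix \<xi> assume "\<xi> \<in> (\<Inter>x\<in>A. {\<xi>. \<xi> x = \<eta> x})"
      then show "F \<xi> \<in> B"
        using local[of \<xi> \<eta>] \<open>F \<eta> \<in> B\<close> by simp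
    qed
  qed
qed

locale markov_semigroup =
  fixes \<theta> :: real and p q :: "int \<Rightarrow> real" and S :: "real \<Rightarrow> (config \<Rightarrow> real) \<Rightarrow> config \<Rightarrow> real"
  assumes semigroup: "markov_semigroup_gen \<theta> p q S"
begin

lemma
  shows continuous_on_S: "\<And>t F. 0 \<le> t \<Longrightarrow> continuous_on UNIV F \<Longrightarrow> continuous_on UNIV (S t F)"
    and S_0: "\<And>F. continuous_on UNIV F \<Longrightarrow> S 0 F = F"
    and S_add: "\<And>s t F. 0 \<le> s \<Longrightarrow> 0 \<le> t \<Longrightarrow> continuous_on UNIV F \<Longrightarrow> S (s + t) F = S s (S t F)"
    and S_linear_fun: "\<And>t F G a b. 0 \<le> t \<Longrightarrow> continuous_on UNIV F \<Longrightarrow> continuous_on UNIV G \<Longrightarrow>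
      S t (\<lambda>\<xi>. a * F \<xi> + b * G \<xi>) = (\<lambda>\<xi>. a * S t F \<xi> + b * S t G \<xi>)"
    and S_nonneg: "\<And>t F \<eta>. 0 \<le> t \<Longrightarrow> continuous_on UNIV F \<Longrightarrow> (\<And>\<xi>. 0 \<le> F \<xi>) \<Longrightarrow> 0 \<le> S t F \<eta>"
    and S_one: "\<And>t. 0 \<le> t \<Longrightarrow> S t (\<lambda>_. 1) = (\<lambda>_. 1)"
    and S_strongly_continuous: "\<And>F \<epsilon>. continuous_on UNIV F \<Longrightarrow> 0 < \<epsilon> \<Longrightarrow>
      \<exists>\<delta>>0. \<forall>h. 0 < h \<and> h < \<delta> \<longrightarrow> (\<forall>\<xi>. \<bar>S h F \<xi> - F \<xi>\<bar> < \<epsilon>)"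
    and S_generator: "\<And>F \<epsilon>. local_fun F \<Longrightarrow> 0 < \<epsilon> \<Longrightarrow>
      \<exists>\<delta>>0. \<forall>h. 0 < h \<and> h < \<delta> \<longrightarrow> (\<forall>\<xi>. \<bar>(S h F \<xi> - F \<xi>) / h - gen \<theta> p q F \<xi>\<bar> < \<epsilon>)"
  using semigroup unfolding markov_semigroup_gen_def by simp_all

lemma S_linear:
  assumes "0 \<le> t" "continuous_on UNIV F" "continuous_on UNIV G"
  shows "S t (\<lambda>\<xi>. a * F \<xi> + b * G \<xi>) \<eta> = a * S t F \<eta> + b * S t G \<eta>"
  by (simp add: S_linear_fun[OF assms])

lemma S_const: "0 \<le> t \<Longrightarrow> S t (\<lambda>_. c) \<eta> = c"
  using S_linear[of t "\<lambda>_. 1" "\<lambda>_. 1" c 0] S_one by simp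

lemma S_diff:
  assumes "0 \<le> t" "continuous_on UNIV F" "continuous_on UNIV G"
  shows "S t (\<lambda>\<xi>. F \<xi> - G \<xi>) \<eta> = S t F \<eta> - S t G \<eta>"
  using S_linear[OF assms, of 1 "-1"] by simp

lemma S_sum:
  assumes "0 \<le> t" "\<And>k. k \<in> K \<Longrightarrow> continuous_on UNIV (F k)"
  shows "S t (\<lambda>\<xi>. \<Sum>k\<in>K. F k \<xi>) \<eta> = (\<Sum>k\<in>K. S t (F k) \<eta>)"
  using assms(2)
proof (induction K rule: infinite_finite_induct)
  case (insert k K)
  have "S t (\<lambda>\<xi>. 1 * F k \<xi> + 1 * (\<Sum>k\<in>K. F k \<xi>)) \<eta> = 1 * S t (F k) \<eta> + 1 * S t (\<lambda>\<xi>. \<Sum>k\<in>K. F k \<xi>) \<eta>"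
    using insert.prems by (intro S_linear \<open>0 \<le> t\<close> continuous_intros) auto
  then show ?case
    using insert by simp
qed (use S_const[OF \<open>0 \<le> t\<close>] in auto)

lemma abs_S_le:
  assumes t: "0 \<le> t" and F: "continuous_on UNIV F" and bound: "\<And>\<xi>. \<bar>F \<xi>\<bar> \<le> c"
  shows "\<bar>S t F \<eta>\<bar> \<le> c"
proof -
  have "0 \<le> c + s * S t F \<eta>" if "\<bar>s\<bar> = 1" for s
  proof -
    have "0 \<le> S t (\<lambda>\<xi>. c * 1 + s * F \<xi>) \<eta>"
    proof (rule S_nonneg[OF t])
      show "continuous_on UNIV (\<lambda>\<xi>. c * 1 + s * F \<xi>)"
        using F by (intro continuous_intros)
      show "0 \<le> c * 1 + s * F \<xi>" for \<xi>
        using bound[of \<xi>] that by (auto simp: abs_le_iff abs_if split: if_splits)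
    qed
    then show ?thesis
      using S_linear[OF t _ F, of "\<lambda>_. 1" c s] S_one[OF t] by simp
  qed
  from this[of 1] this[of "-1"] show ?thesis
    by linarith
qed

lemma S_increment:
  assumes "0 \<le> s" "0 \<le> h" and F: "continuous_on UNIV F"
  shows "S (s + h) F \<eta> - S s F \<eta> = S s (\<lambda>\<xi>. S h F \<xi> - F \<xi>) \<eta>"
  using assms by (simp add: S_add S_diff continuous_on_S)

lemma S_time_continuous:
  assumes F: "continuous_on UNIV F" and "0 \<le> t0" "0 < \<epsilon>"
  shows "\<exists>\<delta>>0. \<forall>t\<ge>0. \<bar>t - t0\<bar> < \<delta> \<longrightarrow> \<bar>S t F \<eta> - S t0 F \<eta>\<bar> < \<epsilon>"
proof -
  obtain \<delta> where "0 < \<delta>" and \<delta>: "\<And>h \<xi>. 0 < h \<Longrightarrow> h < \<delta> \<Longrightarrow> \<bar>S h F \<xi> - F \<xi>\<bar> < \<epsilon> / 2"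
    using S_strongly_continuous[OF F, of "\<epsilon> / 2"] \<open>0 < \<epsilon>\<close> by auto
  have step: "\<bar>S (s + h) F \<eta> - S s F \<eta>\<bar> < \<epsilon>" if "0 \<le> s" "0 < h" "h < \<delta>" for s h
  proof -
    have "\<bar>S h F \<xi> - F \<xi>\<bar> \<le> \<epsilon> / 2" for \<xi>
      using \<delta>[OF that(2,3)] by (simp add: less_imp_le)
    then have "\<bar>S s (\<lambda>\<xi>. S h F \<xi> - F \<xi>) \<eta>\<bar> \<le> \<epsilon> / 2"
      using that F by (intro abs_S_le continuous_intros continuous_on_S) auto
    then show ?thesis
      using S_increment[OF that(1) _ F, of h] that \<open>0 < \<epsilon>\<close> by simp
  qed
  show ?thesis
  proof (intro exI[of _ \<delta>] conjI allI impI)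
    fix t assume "0 \<le> t" "\<bar>t - t0\<bar> < \<delta>"
    then consider "t = t0" | "t0 < t" | "t < t0"
      by linarith
    then show "\<bar>S t F \<eta> - S t0 F \<eta>\<bar> < \<epsilon>"
      using step[of t0 "t - t0"] step[of t "t0 - t"] \<open>0 \<le> t\<close> \<open>0 \<le> t0\<close> \<open>\<bar>t - t0\<bar> < \<delta>\<close> \<open>0 < \<epsilon>\<close>
      by cases (auto simp: abs_minus_commute)
  qed (rule \<open>0 < \<delta>\<close>)
qed

lemma continuous_on_S_time:
  assumes "continuous_on UNIV F"
  shows "continuous_on {0..} (\<lambda>t. S t F \<eta>)"
  unfolding continuous_on_iff dist_real_def
  using S_time_continuous[OF assms] by (metis atLeast_iff)

lemma S_has_real_derivative:
  assumes F: "local_fun F" and G: "continuous_on UNIV (gen \<theta> p q F)" and "0 < t"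
  shows "((\<lambda>s. S s F \<eta>) has_real_derivative S t (gen \<theta> p q F) \<eta>) (at t)"
  unfolding has_field_derivative_iff LIM_eq
proof (intro allI impI)
  let ?G = "gen \<theta> p q F"
  have F': "continuous_on UNIV F"
    using continuous_on_local_fun[OF F] .
  fix e :: real assume "0 < e"
  obtain d1 where "0 < d1"
    and d1: "\<And>h \<xi>. 0 < h \<Longrightarrow> h < d1 \<Longrightarrow> \<bar>(S h F \<xi> - F \<xi>) / h - ?G \<xi>\<bar> < e / 2"
    using S_generator[OF F, of "e / 2"] \<open>0 < e\<close> by auto
  obtain d2 where "0 < d2" and d2: "\<And>s. 0 \<le> s \<Longrightarrow> \<bar>s - t\<bar> < d2 \<Longrightarrow> \<bar>S s ?G \<eta> - S t ?G \<eta>\<bar> < e / 2"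
    using S_time_continuous[OF G, of t "e / 2"] \<open>0 < t\<close> \<open>0 < e\<close> by auto
  show "\<exists>d>0. \<forall>y. y \<noteq> t \<and> norm (y - t) < d \<longrightarrow> norm ((S y F \<eta> - S t F \<eta>) / (y - t) - S t ?G \<eta>) < e"
  proof (intro exI[of _ "min (min d1 d2) t"] conjI allI impI)
    fix y assume y: "y \<noteq> t \<and> norm (y - t) < min (min d1 d2) t"
    define s where "s = min y t"
    define h where "h = \<bar>y - t\<bar>"
    have "0 \<le> s" "0 < h" "h < d1" "\<bar>s - t\<bar> < d2"
      using y by (auto simp: s_def h_def)
    have inc: "continuous_on UNIV (\<lambda>\<xi>. S h F \<xi> - F \<xi>)"
      using continuous_on_S[of h F] F' \<open>0 < h\<close> by (intro continuous_intros) auto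
    have "(S y F \<eta> - S t F \<eta>) / (y - t) = (S (s + h) F \<eta> - S s F \<eta>) / h"
      using y by (cases "y < t") (auto simp: s_def h_def divide_simps algebra_simps)
    also have "\<dots> = S s (\<lambda>\<xi>. (S h F \<xi> - F \<xi>) / h) \<eta>"
      using S_increment[OF \<open>0 \<le> s\<close> _ F'] S_linear[OF \<open>0 \<le> s\<close> inc, of "\<lambda>_. 0" "1 / h" 0] \<open>0 < h\<close>
      by simp
    finally have "(S y F \<eta> - S t F \<eta>) / (y - t) - S t ?G \<eta>
        = S s (\<lambda>\<xi>. (S h F \<xi> - F \<xi>) / h - ?G \<xi>) \<eta> + (S s ?G \<eta> - S t ?G \<eta>)"
      using S_diff[OF \<open>0 \<le> s\<close> _ G, of "\<lambda>\<xi>. (S h F \<xi> - F \<xi>) / h"] continuous_on_divide[OF inc continuous_on_const, of h] \<open>0 < h\<close>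
      by simp
    moreover have "\<bar>S s (\<lambda>\<xi>. (S h F \<xi> - F \<xi>) / h - ?G \<xi>) \<eta>\<bar> \<le> e / 2"
      using d1[OF \<open>0 < h\<close> \<open>h < d1\<close>] continuous_on_divide[OF inc continuous_on_const, of h] \<open>0 < h\<close> G
      by (intro abs_S_le \<open>0 \<le> s\<close> continuous_on_diff) (auto simp: less_imp_le)
    ultimately show "norm ((S y F \<eta> - S t F \<eta>) / (y - t) - S t ?G \<eta>) < e"
      using d2[OF \<open>0 \<le> s\<close> \<open>\<bar>s - t\<bar> < d2\<close>]
        abs_triangle_ineq[of "S s (\<lambda>\<xi>. (S h F \<xi> - F \<xi>) / h - ?G \<xi>) \<eta>" "S s ?G \<eta> - S t ?G \<eta>"]
      by (simp only: real_norm_def)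
  qed (use \<open>0 < d1\<close> \<open>0 < d2\<close> \<open>0 < t\<close> in simp)
qed

end

section \<open>The generator acting on interval products\<close>

lemma downward_closed_eq_lessThan_card:
  fixes J :: "nat set"
  assumes "finite J" and down: "\<And>i j. j \<in> J \<Longrightarrow> i \<le> j \<Longrightarrow> i \<in> J"
  shows "J = {..<card J}"
proof (cases "J = {}")
  case False
  have "J = {..Max J}"
    using Max_ge[OF \<open>finite J\<close>] Max_in[OF \<open>finite J\<close> False] down by auto
  then show ?thesis
    by (metis card_atMost lessThan_Suc_atMost)
qed simp

definition pair_intervals :: "nat \<Rightarrow> (nat \<Rightarrow> int) \<Rightarrow> int set" where
  "pair_intervals m y = (\<Union>i<m. {y (2 * i)..<y (2 * i + 1)})"

lemma finite_pair_intervals [simp]: "finite (pair_intervals m y)"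
  by (simp add: pair_intervals_def)

(* For sorted endpoints, x lies in one of the intervals [y (2 i), y (2 i + 1)) iff an odd number
   of endpoints is \<le> x; moving one endpoint by one therefore toggles a single site. *)
lemma mem_pair_intervals_iff_odd:
  assumes mono: "mono_on {..<2 * m} y"
  shows "x \<in> pair_intervals m y \<longleftrightarrow> odd (card {j. j < 2 * m \<and> y j \<le> x})"
proof -
  let ?J = "{j. j < 2 * m \<and> y j \<le> x}"
  have "?J = {..<card ?J}"
    by (rule downward_closed_eq_lessThan_card) (auto intro: order_trans[OF mono_onD[OF mono]])
  then have below: "j < 2 * m \<Longrightarrow> y j \<le> x \<longleftrightarrow> j < card ?J" for j
    by (metis (mono_tags, lifting) lessThan_iff mem_Collect_eq)
  have "card ?J \<le> 2 * m"
    using card_mono[of "{..<2 * m}" ?J] by auto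
  then have "(\<exists>i<m. 2 * i < card ?J \<and> \<not> 2 * i + 1 < card ?J) \<longleftrightarrow> odd (card ?J)"
    by (auto elim!: oddE) presburger
  moreover have "x \<in> pair_intervals m y \<longleftrightarrow> (\<exists>i<m. 2 * i < card ?J \<and> \<not> 2 * i + 1 < card ?J)"
    by (auto simp: pair_intervals_def below[symmetric] not_le)
  ultimately show ?thesis
    by blast
qed

definition toggle :: "'a \<Rightarrow> 'a set \<Rightarrow> 'a set" where
  "toggle a U = (if a \<in> U then U - {a} else insert a U)"

lemma mem_toggle [simp]: "x \<in> toggle a U \<longleftrightarrow> (x \<in> U \<longleftrightarrow> x \<noteq> a)"
  by (auto simp: toggle_def)

lemma finite_toggle [simp]: "finite (toggle a U) \<longleftrightarrow> finite U"
  by (simp add: toggle_def)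

lemma mono_on_shift_endpoint:
  fixes y :: "nat \<Rightarrow> int"
  assumes y: "strict_mono_on {..<N} y" and "k < N" and "d \<in> {-1, 1}"
  shows "mono_on {..<N} (y(k := y k + d))"
proof (rule mono_onI)
  fix i j assume "i \<in> {..<N}" "j \<in> {..<N}" "i \<le> j"
  then show "(y(k := y k + d)) i \<le> (y(k := y k + d)) j"
    using strict_mono_onD[OF y, of i j] strict_mono_onD[OF y, of i k] strict_mono_onD[OF y, of k j]
      \<open>k < N\<close> \<open>d \<in> {-1, 1}\<close> by (cases "i = j") (auto simp: le_less)
qed

lemma pair_intervals_shift_up:
  assumes y: "strict_mono_on {..<2 * m} y" and k: "k < 2 * m"
  shows "pair_intervals m (y(k := y k + 1)) = toggle (y k) (pair_intervals m y)"
proof (rule set_eqI)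
  fix x
  let ?J = "\<lambda>z :: nat \<Rightarrow> int. {j. j < 2 * m \<and> z j \<le> x}"
  have mono: "mono_on {..<2 * m} y"
    using y by (rule strict_mono_on_imp_mono_on)
  have mono': "mono_on {..<2 * m} (y(k := y k + 1))"
    using mono_on_shift_endpoint[OF y k, of 1] by simp
  have "?J (y(k := y k + 1)) = (if x = y k then ?J y - {k} else ?J y)"
    by auto
  moreover have "x = y k \<Longrightarrow> k \<in> ?J y"
    using k by simp
  moreover have "finite (?J y)"
    by simp
  ultimately have "odd (card (?J (y(k := y k + 1)))) \<longleftrightarrow> (odd (card (?J y)) \<longleftrightarrow> x \<noteq> y k)"
    by (cases "x = y k") (auto simp: card_gt_0_iff[symmetric] odd_pos)
  then show "x \<in> pair_intervals m (y(k := y k + 1)) \<longleftrightarrow> x \<in> toggle (y k) (pair_intervals m y)"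
    by (simp add: mem_pair_intervals_iff_odd[OF mono] mem_pair_intervals_iff_odd[OF mono'])
qed

lemma pair_intervals_shift_down:
  assumes y: "strict_mono_on {..<2 * m} y" and k: "k < 2 * m"
  shows "pair_intervals m (y(k := y k - 1)) = toggle (y k - 1) (pair_intervals m y)"
proof (rule set_eqI)
  fix x
  let ?J = "\<lambda>z :: nat \<Rightarrow> int. {j. j < 2 * m \<and> z j \<le> x}"
  have mono: "mono_on {..<2 * m} y"
    using y by (rule strict_mono_on_imp_mono_on)
  have mono': "mono_on {..<2 * m} (y(k := y k - 1))"
    using mono_on_shift_endpoint[OF y k, of "-1"] by simp
  have "?J (y(k := y k - 1)) = (if x = y k - 1 then insert k (?J y) else ?J y)"
    using k by auto
  moreover have "x = y k - 1 \<Longrightarrow> k \<notin> ?J y"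
    by simp
  moreover have "finite (?J y)"
    by simp
  ultimately have "odd (card (?J (y(k := y k - 1)))) \<longleftrightarrow> (odd (card (?J y)) \<longleftrightarrow> x \<noteq> y k - 1)"
    by (cases "x = y k - 1") auto
  then show "x \<in> pair_intervals m (y(k := y k - 1)) \<longleftrightarrow> x \<in> toggle (y k - 1) (pair_intervals m y)"
    by (simp add: mem_pair_intervals_iff_odd[OF mono] mem_pair_intervals_iff_odd[OF mono'])
qed

lemma endpoint_mem_pair_intervals:
  assumes y: "strict_mono_on {..<2 * m} y" and k: "k < 2 * m"
  shows "y k \<in> pair_intervals m y \<longleftrightarrow> even k" "y k - 1 \<in> pair_intervals m y \<longleftrightarrow> odd k"
proof -
  have mono: "mono_on {..<2 * m} y"
    using y by (rule strict_mono_on_imp_mono_on)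
  have "{j. j < 2 * m \<and> y j \<le> y k} = {..k}"
    using k strict_mono_on_less_eq[OF y] by auto
  then show "y k \<in> pair_intervals m y \<longleftrightarrow> even k"
    by (simp add: mem_pair_intervals_iff_odd[OF mono])
  have "{j. j < 2 * m \<and> y j \<le> y k - 1} = {..<k}"
    using k strict_mono_on_less[OF y] by (auto simp: zle_diff1_eq)
  then show "y k - 1 \<in> pair_intervals m y \<longleftrightarrow> odd k"
    by (simp add: mem_pair_intervals_iff_odd[OF mono])
qed

lemma mem_pair_intervals_pred:
  assumes "mono_on {..<2 * m} y" "x \<notin> y ` {..<2 * m}"
  shows "x - 1 \<in> pair_intervals m y \<longleftrightarrow> x \<in> pair_intervals m y"
proof -
  have "{j. j < 2 * m \<and> y j \<le> x - 1} = {j. j < 2 * m \<and> y j \<le> x}"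
    using assms(2) by force
  then show ?thesis
    by (simp add: mem_pair_intervals_iff_odd[OF assms(1)])
qed

definition occupation :: "int set \<Rightarrow> config \<Rightarrow> nat" where
  "occupation U \<xi> = card {x \<in> U. \<xi> x}"

lemma Sigma_prod_eq_power_occupation:
  assumes mono: "mono_on {..<2 * m} y"
  shows "Sigma_prod \<theta> m y \<xi> = (- \<theta>) ^ occupation (pair_intervals m y) \<xi>"
proof -
  define C where "C i = {x. y (2 * i) \<le> x \<and> x < y (2 * i + 1) \<and> \<xi> x}" for i
  have "finite (C i)" for i
    by (rule finite_subset[of _ "{y (2 * i)..<y (2 * i + 1)}"]) (auto simp: C_def)
  moreover have "C i \<inter> C j = {}" if "i < j" "j < m" for i j
    using mono_onD[OF mono, of "2 * i + 1" "2 * j"] that by (auto simp: C_def)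
  then have "C i \<inter> C j = {}" if "i < m" "j < m" "i \<noteq> j" for i j
    using that by (metis inf_commute linorder_neqE_nat)
  ultimately have "(\<Sum>i<m. card (C i)) = card (\<Union>i<m. C i)"
    by (intro card_UN_disjoint[symmetric]) auto
  moreover have "(\<Union>i<m. C i) = {x \<in> pair_intervals m y. \<xi> x}"
    by (auto simp: C_def pair_intervals_def)
  moreover have "Sigma_prod \<theta> m y \<xi> = (- \<theta>) ^ (\<Sum>i<m. card (C i))"
    by (simp add: Sigma_prod_def sigma_def count_int_def C_def power_sum)
  ultimately show ?thesis
    by (simp add: occupation_def)
qed

lemma occupation_split:
  assumes "finite V" "s \<noteq> d"
  shows "occupation V \<xi> = occupation (V - {s, d}) \<xi> + of_bool (s \<in> V \<and> \<xi> s) + of_bool (d \<in> V \<and> \<xi> d)"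
proof -
  have "{x \<in> V. \<xi> x} = {x \<in> V - {s, d}. \<xi> x} \<union> {x \<in> {s, d}. x \<in> V \<and> \<xi> x}"
    by auto
  then have "card {x \<in> V. \<xi> x} = card {x \<in> V - {s, d}. \<xi> x} + card {x \<in> {s, d}. x \<in> V \<and> \<xi> x}"
    by (simp add: card_Un_disjoint \<open>finite V\<close> disjoint_iff)
  moreover have "{x \<in> {s, d}. x \<in> V \<and> \<xi> x}
      = (if s \<in> V \<and> \<xi> s then {s} else {}) \<union> (if d \<in> V \<and> \<xi> d then {d} else {})"
    by auto
  then have "card {x \<in> {s, d}. x \<in> V \<and> \<xi> x} = of_bool (s \<in> V \<and> \<xi> s) + of_bool (d \<in> V \<and> \<xi> d)"
    using \<open>s \<noteq> d\<close> by simp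
  ultimately show ?thesis
    by (simp add: occupation_def)
qed

(* Two particles meeting inside U carried the factor \<theta>\<^sup>2; after annihilation (probability \<theta>)
   or coalescence they carry 1 or -\<theta>, and \<theta> * 1 + (1 - \<theta>) * (- \<theta>) = \<theta>\<^sup>2.  So only jumps across
   the boundary of U change the expectation. *)
lemma jump_increment:
  fixes \<theta> :: real
  assumes "finite U" "s \<noteq> d"
  defines "F \<equiv> \<lambda>V \<xi>. (- \<theta>) ^ occupation V \<xi>"
  shows "\<theta> * F U (eta_a \<eta> s d) + (1 - \<theta>) * F U (eta_c \<eta> s d) - F U \<eta> =
    (if (s \<in> U) = (d \<in> U) then 0 else F (toggle s U) \<eta> - F U \<eta>)"
proof -
  define N where "N = occupation (U - {s, d}) \<eta>"
  have occ: "occupation V \<xi> = N + of_bool (s \<in> V \<and> \<xi> s) + of_bool (d \<in> V \<and> \<xi> d)"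
    if "finite V" "V - {s, d} = U - {s, d}" "\<And>x. x \<noteq> s \<Longrightarrow> x \<noteq> d \<Longrightarrow> \<xi> x = \<eta> x" for V \<xi>
  proof -
    have "occupation (V - {s, d}) \<xi> = N"
      unfolding N_def occupation_def that(2) using that(3) by (metis (lifting) DiffD2 insertCI)
    then show ?thesis
      using occupation_split[OF that(1) \<open>s \<noteq> d\<close>] by simp
  qed
  have "toggle s U - {s, d} = U - {s, d}"
    by auto
  then have "occupation (toggle s U) \<eta> = N + of_bool (s \<notin> U \<and> \<eta> s) + of_bool (d \<in> U \<and> \<eta> d)"
    using occ[of "toggle s U" \<eta>] \<open>finite U\<close> \<open>s \<noteq> d\<close> by simp
  moreover have "occupation U (eta_a \<eta> s d) = N + of_bool (d \<in> U \<and> \<eta> s \<noteq> \<eta> d)"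
    using occ[of U "eta_a \<eta> s d"] \<open>finite U\<close> \<open>s \<noteq> d\<close> by (simp add: eta_a_def)
  moreover have "occupation U (eta_c \<eta> s d) = N + of_bool (d \<in> U \<and> (\<eta> s \<or> \<eta> d))"
    using occ[of U "eta_c \<eta> s d"] \<open>finite U\<close> \<open>s \<noteq> d\<close> by (simp add: eta_c_def)
  moreover have "occupation U \<eta> = N + of_bool (s \<in> U \<and> \<eta> s) + of_bool (d \<in> U \<and> \<eta> d)"
    using occ[of U \<eta>] \<open>finite U\<close> by simp
  ultimately show ?thesis
    unfolding F_def
    by (cases "\<eta> s"; cases "\<eta> d"; cases "s \<in> U"; cases "d \<in> U") (simp_all add: algebra_simps power_add)
qed

(* Endpoints move against the particles: a particle jumping from y k to y k - 1, at rate q (y k),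
   changes the expectation of Sigma_prod like moving the endpoint y k to y k + 1. *)
lemma gen_Sigma_prod:
  assumes y: "strict_mono_on {..<2 * m} y"
  shows "gen \<theta> p q (Sigma_prod \<theta> m y) \<eta> =
    (\<Sum>k<2 * m. q (y k) * (Sigma_prod \<theta> m (y(k := y k + 1)) \<eta> - Sigma_prod \<theta> m y \<eta>)
              + p (y k) * (Sigma_prod \<theta> m (y(k := y k - 1)) \<eta> - Sigma_prod \<theta> m y \<eta>))"
proof -
  define U where "U = pair_intervals m y"
  define F where "F V \<xi> = (- \<theta>) ^ occupation V \<xi>" for V \<xi>
  define T where "T x = q x * (\<theta> * F U (eta_a \<eta> x (x - 1)) + (1 - \<theta>) * F U (eta_c \<eta> x (x - 1)) - F U \<eta>)
      + p x * (\<theta> * F U (eta_a \<eta> (x - 1) x) + (1 - \<theta>) * F U (eta_c \<eta> (x - 1) x) - F U \<eta>)" for x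
  have mono: "mono_on {..<2 * m} y"
    using y by (rule strict_mono_on_imp_mono_on)
  have Sigma: "Sigma_prod \<theta> m y = F U"
    by (intro ext) (simp add: Sigma_prod_eq_power_occupation[OF mono] F_def U_def)
  have T: "T x = q x * (if (x \<in> U) = (x - 1 \<in> U) then 0 else F (toggle x U) \<eta> - F U \<eta>)
      + p x * (if (x - 1 \<in> U) = (x \<in> U) then 0 else F (toggle (x - 1) U) \<eta> - F U \<eta>)" for x
    unfolding T_def F_def by (subst (1 2) jump_increment) (simp_all add: U_def)
  have T_0: "T x = 0" if "x \<notin> y ` {..<2 * m}" for x
    using mem_pair_intervals_pred[OF mono that] by (simp add: T U_def)
  have T_endpoint: "T (y k) = q (y k) * (Sigma_prod \<theta> m (y(k := y k + 1)) \<eta> - Sigma_prod \<theta> m y \<eta>)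
      + p (y k) * (Sigma_prod \<theta> m (y(k := y k - 1)) \<eta> - Sigma_prod \<theta> m y \<eta>)" if "k < 2 * m" for k
  proof -
    have "Sigma_prod \<theta> m (y(k := y k + 1)) = F (toggle (y k) U)"
      using Sigma_prod_eq_power_occupation[OF mono_on_shift_endpoint[OF y that, of 1]]
      by (intro ext) (simp add: pair_intervals_shift_up[OF y that] F_def U_def)
    moreover have "Sigma_prod \<theta> m (y(k := y k - 1)) = F (toggle (y k - 1) U)"
      using Sigma_prod_eq_power_occupation[OF mono_on_shift_endpoint[OF y that, of "-1"]]
      by (intro ext) (simp add: pair_intervals_shift_down[OF y that] F_def U_def)
    ultimately show ?thesis
      using endpoint_mem_pair_intervals[OF y that] by (simp add: T Sigma U_def)
  qed
  have "gen \<theta> p q (Sigma_prod \<theta> m y) \<eta> = infsum T UNIV"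
    by (simp add: gen_def Sigma T_def[abs_def])
  also have "\<dots> = sum T (y ` {..<2 * m})"
    using T_0 by (subst infsum_cong_neutral[where T = "y ` {..<2 * m}" and g = T]) auto
  also have "\<dots> = (\<Sum>k<2 * m. T (y k))"
    using strict_mono_on_imp_inj_on[OF y] by (rule sum.reindex[unfolded o_def])
  finally show ?thesis
    by (simp add: T_endpoint)
qed

lemma local_fun_Sigma_prod: "local_fun (Sigma_prod \<theta> m y)"
  unfolding local_fun_def
proof (intro exI conjI allI impI)
  fix \<eta> \<xi> :: config assume agree: "\<forall>x\<in>pair_intervals m y. \<eta> x = \<xi> x"
  have "count_int \<eta> (y (2 * i)) (y (2 * i + 1)) = count_int \<xi> (y (2 * i)) (y (2 * i + 1))" if "i < m" for i
    unfolding count_int_def using agree that by (intro arg_cong[where f = card]) (auto simp: pair_intervals_def)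
  then show "Sigma_prod \<theta> m y \<eta> = Sigma_prod \<theta> m y \<xi>"
    by (simp add: Sigma_prod_def sigma_def)
qed simp

lemma pair_intervals_remove_pair:
  assumes mono: "mono_on {..<2 * Suc m} y" and k: "k + 1 < 2 * Suc m" and eq: "y k = y (k + 1)"
  shows "pair_intervals (Suc m) y = pair_intervals m (y \<circ> skip_pair k)"
proof (rule set_eqI)
  fix x
  let ?J = "{j. j < 2 * Suc m \<and> y j \<le> x}"
  let ?J' = "{i. i < 2 * m \<and> y (skip_pair k i) \<le> x}"
  have mono': "mono_on {..<2 * m} (y \<circ> skip_pair k)"
    by (rule mono_onI) (use k in \<open>auto simp: skip_pair_def intro!: mono_onD[OF mono]\<close>)
  have split: "?J = skip_pair k ` ?J' \<union> ({k, k + 1} \<inter> ?J)"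
  proof -
    have "j \<in> skip_pair k ` {..<2 * m}" if "j < 2 * Suc m" "j \<noteq> k" "j \<noteq> k + 1" for j
      using that k by (intro image_eqI[of _ _ "if j < k then j else j - 2"]) (auto simp: skip_pair_def)
    then show ?thesis
      using k by (auto simp: skip_pair_def)
  qed
  have "inj (skip_pair k)"
    by (rule injI) (auto simp: skip_pair_def split: if_splits)
  moreover have "skip_pair k ` ?J' \<inter> ({k, k + 1} \<inter> ?J) = {}"
    by (auto simp: skip_pair_def)
  ultimately have "card ?J = card ?J' + card ({k, k + 1} \<inter> ?J)"
    by (subst split) (simp add: card_Un_disjoint card_image inj_on_subset)
  moreover have "card ({k, k + 1} \<inter> ?J) \<in> {0, 2}"
    using k eq by (cases "y k \<le> x") auto
  ultimately have "odd (card ?J) \<longleftrightarrow> odd (card ?J')"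
    by auto
  then show "x \<in> pair_intervals (Suc m) y \<longleftrightarrow> x \<in> pair_intervals m (y \<circ> skip_pair k)"
    by (simp add: mem_pair_intervals_iff_odd[OF mono] mem_pair_intervals_iff_odd[OF mono'])
qed

lemma Sigma_prod_remove_pair:
  assumes mono: "mono_on {..<2 * Suc m} y" and k: "k + 1 < 2 * Suc m" and eq: "y k = y (k + 1)"
  shows "Sigma_prod \<theta> (Suc m) y = Sigma_prod \<theta> m (y \<circ> skip_pair k)"
proof -
  have mono': "mono_on {..<2 * m} (y \<circ> skip_pair k)"
    by (rule mono_onI) (use k in \<open>auto simp: skip_pair_def intro!: mono_onD[OF mono]\<close>)
  show ?thesis
    using Sigma_prod_eq_power_occupation[OF mono] Sigma_prod_eq_power_occupation[OF mono']
      pair_intervals_remove_pair[OF assms] by auto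
qed

section \<open>Uniqueness for the backward equation\<close>

lemma abs_lattice_generator_le:
  fixes u :: "(nat \<Rightarrow> int) \<Rightarrow> real"
  assumes neighbours: "\<And>k. k < N \<Longrightarrow> \<bar>u (y(k := y k + 1))\<bar> \<le> X \<and> \<bar>u (y(k := y k - 1))\<bar> \<le> X"
    and "\<bar>u y\<bar> \<le> X" and rates: "\<And>x. \<bar>\<alpha> x\<bar> \<le> M \<and> \<bar>\<beta> x\<bar> \<le> M"
  shows "\<bar>\<Sum>k<N. \<alpha> (y k) * (u (y(k := y k + 1)) - u y) + \<beta> (y k) * (u (y(k := y k - 1)) - u y)\<bar>
    \<le> 4 * real N * M * X"
proof -
  have "\<bar>\<alpha> (y k) * (u (y(k := y k + 1)) - u y) + \<beta> (y k) * (u (y(k := y k - 1)) - u y)\<bar> \<le> 4 * M * X"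
    if "k < N" for k
  proof -
    have "\<bar>u (y(k := y k + 1)) - u y\<bar> \<le> 2 * X" "\<bar>u (y(k := y k - 1)) - u y\<bar> \<le> 2 * X"
      using neighbours[OF that] \<open>\<bar>u y\<bar> \<le> X\<close> by linarith+
    then have "\<bar>\<alpha> (y k)\<bar> * \<bar>u (y(k := y k + 1)) - u y\<bar> \<le> M * (2 * X)"
      "\<bar>\<beta> (y k)\<bar> * \<bar>u (y(k := y k - 1)) - u y\<bar> \<le> M * (2 * X)"
      using rates[of "y k"] by (auto intro!: mult_mono)
    moreover have "\<bar>\<alpha> (y k) * (u (y(k := y k + 1)) - u y) + \<beta> (y k) * (u (y(k := y k - 1)) - u y)\<bar>
        \<le> \<bar>\<alpha> (y k)\<bar> * \<bar>u (y(k := y k + 1)) - u y\<bar> + \<bar>\<beta> (y k)\<bar> * \<bar>u (y(k := y k - 1)) - u y\<bar>"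
      unfolding abs_mult[symmetric] by (rule abs_triangle_ineq)
    ultimately show ?thesis
      by linarith
  qed
  then have "\<bar>\<Sum>k<N. \<alpha> (y k) * (u (y(k := y k + 1)) - u y) + \<beta> (y k) * (u (y(k := y k - 1)) - u y)\<bar>
      \<le> (\<Sum>k<N. 4 * M * X)"
    by (intro order_trans[OF sum_abs sum_mono]) auto
  then show ?thesis
    by simp
qed

lemma eq_0_if_abs_le_divide_power:
  fixes x B :: real
  assumes "\<And>i::nat. \<bar>x\<bar> \<le> B / 2 ^ i"
  shows "x = 0"
proof (rule ccontr)
  assume "x \<noteq> 0"
  obtain i :: nat where "B / \<bar>x\<bar> < 2 ^ i"
    using real_arch_pow[of 2 "B / \<bar>x\<bar>"] by auto
  then have "B / 2 ^ i < \<bar>x\<bar>"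
    using \<open>x \<noteq> 0\<close> by (simp add: divide_less_eq mult.commute)
  with assms[of i] show False
    by simp
qed

context
  fixes d :: "real \<Rightarrow> (nat \<Rightarrow> int) \<Rightarrow> real" and Y Ys :: "(nat \<Rightarrow> int) set"
    and \<alpha> \<beta> :: "int \<Rightarrow> real" and N :: nat and B M :: real
  assumes bounded: "\<And>t y. 0 \<le> t \<Longrightarrow> y \<in> Y \<Longrightarrow> \<bar>d t y\<bar> \<le> B"
    and boundary: "\<And>t y. 0 \<le> t \<Longrightarrow> y \<in> Y \<Longrightarrow> y \<notin> Ys \<Longrightarrow> d t y = 0"
    and continuous: "\<And>y. y \<in> Ys \<Longrightarrow> continuous_on {0..} (\<lambda>t. d t y)"
    and backward: "\<And>y t. y \<in> Ys \<Longrightarrow> 0 < t \<Longrightarrow> ((\<lambda>t. d t y) has_real_derivative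
      (\<Sum>k<N. \<alpha> (y k) * (d t (y(k := y k + 1)) - d t y) + \<beta> (y k) * (d t (y(k := y k - 1)) - d t y))) (at t)"
    and neighbours: "\<And>y k. y \<in> Ys \<Longrightarrow> k < N \<Longrightarrow> y(k := y k + 1) \<in> Y \<and> y(k := y k - 1) \<in> Y"
    and rates: "\<And>x. \<bar>\<alpha> x\<bar> \<le> M \<and> \<bar>\<beta> x\<bar> \<le> M"
begin

lemma rate_bound_nonneg: "0 \<le> M"
  using rates[of 0] by linarith

definition step_length :: real where
  "step_length = 1 / (2 * (4 * real N * M + 1))"

lemma step_length_pos: "0 < step_length"
  using rate_bound_nonneg by (simp add: step_length_def add_nonneg_pos)

lemma backward_equation_halving:
  assumes "0 \<le> a" and zero: "\<And>w. w \<in> Y \<Longrightarrow> d a w = 0"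
    and bound: "\<And>s w. a \<le> s \<Longrightarrow> s \<le> a + step_length \<Longrightarrow> w \<in> Y \<Longrightarrow> \<bar>d s w\<bar> \<le> X"
    and t: "a < t" "t \<le> a + step_length" and "y \<in> Y" "y \<in> Ys"
  shows "\<bar>d t y\<bar> \<le> X / 2"
proof -
  obtain z l where z: "a < z" "z < t" and deriv_z: "((\<lambda>t. d t y) has_real_derivative l) (at z)"
    and mvt: "d t y - d a y = (t - a) * l"
  proof -
    have "continuous_on {a..t} (\<lambda>t. d t y)"
      using continuous_on_subset[OF continuous[OF \<open>y \<in> Ys\<close>]] \<open>0 \<le> a\<close> by auto
    moreover have "(\<lambda>t. d t y) differentiable (at x)" if "a < x" "x < t" for x
      using backward[OF \<open>y \<in> Ys\<close>, of x] that \<open>0 \<le> a\<close> real_differentiable_def by force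
    ultimately show ?thesis
      using MVT[OF \<open>a < t\<close>] that by blast
  qed
  have "0 \<le> X"
    using bound[of a y] \<open>y \<in> Y\<close> step_length_pos by force
  have "\<bar>l\<bar> \<le> 4 * real N * M * X"
  proof -
    have "l = (\<Sum>k<N. \<alpha> (y k) * (d z (y(k := y k + 1)) - d z y) + \<beta> (y k) * (d z (y(k := y k - 1)) - d z y))"
      using DERIV_unique[OF deriv_z backward[OF \<open>y \<in> Ys\<close>]] z \<open>0 \<le> a\<close> by simp
    also have "\<bar>\<dots>\<bar> \<le> 4 * real N * M * X"
      using bound[of z] neighbours[OF \<open>y \<in> Ys\<close>] \<open>y \<in> Y\<close> z t
      by (intro abs_lattice_generator_le rates) (simp_all del: fun_upd_apply)
    finally show ?thesis .
  qed
  also have "\<dots> \<le> (4 * real N * M + 1) * X"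
    using \<open>0 \<le> X\<close> by (simp add: distrib_right)
  finally have "\<bar>d t y\<bar> \<le> step_length * ((4 * real N * M + 1) * X)"
    using mvt zero[OF \<open>y \<in> Y\<close>] t by (simp add: abs_mult mult_mono)
  also have "\<dots> = X / 2"
  proof -
    have "0 \<le> real N * M"
      using rate_bound_nonneg by simp
    then show ?thesis
      by (simp add: step_length_def field_simps)
  qed
  finally show ?thesis .
qed

lemma backward_equation_vanishes_on_step:
  assumes "0 \<le> a" and zero: "\<And>w. w \<in> Y \<Longrightarrow> d a w = 0"
    and "a \<le> t" "t \<le> a + step_length" "y \<in> Y"
  shows "d t y = 0"
proof (rule eq_0_if_abs_le_divide_power)
  fix i :: nat
  show "\<bar>d t y\<bar> \<le> B / 2 ^ i"
    using \<open>a \<le> t\<close> \<open>t \<le> a + step_length\<close> \<open>y \<in> Y\<close>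
  proof (induction i arbitrary: t y)
    case 0
    then show ?case
      using bounded \<open>0 \<le> a\<close> by simp
  next
    case (Suc i)
    consider "t = a" | "y \<notin> Ys" | "a < t" "y \<in> Ys"
      using Suc.prems by linarith
    then have "d t y = 0 \<or> \<bar>d t y\<bar> \<le> (B / 2 ^ i) / 2"
    proof cases
      case 1
      then show ?thesis
        using zero[OF \<open>y \<in> Y\<close>] by simp
    next
      case 2
      then show ?thesis
        using boundary[of t y] Suc.prems \<open>0 \<le> a\<close> by simp
    next
      case 3
      then show ?thesis
        using backward_equation_halving[OF \<open>0 \<le> a\<close> zero Suc.IH] Suc.prems by blast
    qed
    moreover have "0 \<le> B"
      using bounded[of 0 y] \<open>y \<in> Y\<close> by simp
    ultimately show ?case
      by auto
  qed
qed

lemma backward_equation_solution_eq_0: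
  assumes initial: "\<And>w. w \<in> Y \<Longrightarrow> d 0 w = 0" and "0 \<le> t" "y \<in> Y"
  shows "d t y = 0"
proof -
  have "d t y = 0" if "t \<le> real j * step_length" "0 \<le> t" "y \<in> Y" for j :: nat and t y
    using that
  proof (induction j arbitrary: t y)
    case (Suc j)
    have "0 \<le> real j * step_length"
      using step_length_pos by simp
    then show ?case
      using Suc backward_equation_vanishes_on_step[of "real j * step_length" t y]
      by (cases "t \<le> real j * step_length") (auto simp: algebra_simps)
  qed (use initial in simp)
  moreover obtain j :: nat where "t / step_length \<le> real j"
    using real_arch_simple by blast
  ultimately show ?thesis
    using \<open>0 \<le> t\<close> \<open>y \<in> Y\<close> step_length_pos by (simp add: divide_le_eq)
qed

end

section \<open>Duality\<close>

definition antisym_kernel :: "(int \<Rightarrow> int \<Rightarrow> real) \<Rightarrow> (nat \<Rightarrow> int) \<Rightarrow> nat \<Rightarrow> nat \<Rightarrow> real" where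
  "antisym_kernel E y i j = (if i < j then E (y i) (y j) else if j < i then - E (y j) (y i) else 0)"

lemma pfaffian_antisym_kernel_remove_pair:
  assumes k: "k + 1 < 2 * Suc m" and eq: "y k = y (k + 1)"
  shows "pfaffian (Suc m) (antisym_kernel E y) = E (y k) (y k) * pfaffian m (antisym_kernel E (y \<circ> skip_pair k))"
proof -
  have "pfaffian (Suc m) (antisym_kernel E y)
      = antisym_kernel E y k (k + 1) * pfaffian m (\<lambda>i j. antisym_kernel E y (skip_pair k i) (skip_pair k j))"
    using eq by (intro pfaffian_reduce_adjacent[OF k]) (auto simp: antisym_kernel_def)
  moreover have "(\<lambda>i j. antisym_kernel E y (skip_pair k i) (skip_pair k j)) = antisym_kernel E (y \<circ> skip_pair k)"
    by (simp add: antisym_kernel_def fun_eq_iff)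
  ultimately show ?thesis
    using eq by (simp add: antisym_kernel_def)
qed

lemma sigma_same [simp]: "sigma \<theta> a a \<eta> = 1"
proof -
  have "{x. a \<le> x \<and> x < a \<and> \<eta> x} = {}"
    by auto
  then show ?thesis
    unfolding sigma_def count_int_def by (simp only: card.empty power_0)
qed

lemma sigma_shift_left:
  assumes "a < b"
  shows "sigma \<theta> a b \<eta> = (if \<eta> a then - \<theta> else 1) * sigma \<theta> (a + 1) b \<eta>"
proof -
  have "{x. a \<le> x \<and> x < b \<and> \<eta> x} = (if \<eta> a then insert a else id) {x. a + 1 \<le> x \<and> x < b \<and> \<eta> x}"
    using assms by (auto simp: order.order_iff_strict)
  moreover have "finite {x. a + 1 \<le> x \<and> x < b \<and> \<eta> x}"
    by (rule finite_subset[of _ "{a + 1..<b}"]) auto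
  ultimately show ?thesis
    by (simp add: sigma_def count_int_def)
qed

lemma Sigma_prod_shift_first:
  assumes "y 0 < y 1"
  shows "Sigma_prod \<theta> (Suc m) y \<eta> = (if \<eta> (y 0) then - \<theta> else 1) * Sigma_prod \<theta> (Suc m) (y(0 := y 0 + 1)) \<eta>"
  unfolding Sigma_prod_def prod.lessThan_Suc_shift using sigma_shift_left[OF assms] by simp

lemma pfaffian_antisym_kernel_shift_first:
  fixes y :: "nat \<Rightarrow> int"
  assumes mono: "mono_on {..<2 * Suc m} y" and "y 0 < y 1"
  shows "pfaffian (Suc m) (antisym_kernel (\<lambda>a b. sigma \<theta> a b \<eta>) y)
    = (if \<eta> (y 0) then - \<theta> else 1) * pfaffian (Suc m) (antisym_kernel (\<lambda>a b. sigma \<theta> a b \<eta>) (y(0 := y 0 + 1)))"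
proof (rule pfaffian_scale_row[where k = 0])
  fix a assume "a < 2 * Suc m"
  have "sigma \<theta> (y 0) (y a) \<eta> = (if \<eta> (y 0) then - \<theta> else 1) * sigma \<theta> (y 0 + 1) (y a) \<eta>" if "0 < a"
    using sigma_shift_left[of "y 0" "y a"] mono_onD[OF mono, of 1 a] \<open>y 0 < y 1\<close> \<open>a < 2 * Suc m\<close> that
    by simp
  then show "antisym_kernel (\<lambda>a b. sigma \<theta> a b \<eta>) y 0 a
      = (if \<eta> (y 0) then - \<theta> else 1) * antisym_kernel (\<lambda>a b. sigma \<theta> a b \<eta>) (y(0 := y 0 + 1)) 0 a"
    "antisym_kernel (\<lambda>a b. sigma \<theta> a b \<eta>) y a 0
      = (if \<eta> (y 0) then - \<theta> else 1) * antisym_kernel (\<lambda>a b. sigma \<theta> a b \<eta>) (y(0 := y 0 + 1)) a 0"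
    by (auto simp: antisym_kernel_def)
qed (auto simp: antisym_kernel_def)

lemma mono_on_shift_first:
  fixes y :: "nat \<Rightarrow> int"
  assumes mono: "mono_on {..<N} y" and "y 0 < y 1"
  shows "mono_on {..<N} (y(0 := y 0 + 1))"
proof (rule mono_onI)
  fix i j assume "i \<in> {..<N}" "j \<in> {..<N}" "i \<le> j"
  then show "(y(0 := y 0 + 1)) i \<le> (y(0 := y 0 + 1)) j"
    using mono_onD[OF mono, of i j] mono_onD[OF mono, of 1 j] \<open>y 0 < y 1\<close>
    by (cases "i = 0"; cases "j = 0") auto
qed

lemma Sigma_prod_eq_pfaffian_sigma:
  assumes "mono_on {..<2 * n} y"
  shows "Sigma_prod \<theta> n y \<eta> = pfaffian n (antisym_kernel (\<lambda>a b. sigma \<theta> a b \<eta>) y)"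
  using assms
proof (induction n arbitrary: y)
  case 0
  then show ?case
    by (simp add: Sigma_prod_def)
next
  case (Suc m)
  have "Sigma_prod \<theta> (Suc m) y \<eta> = pfaffian (Suc m) (antisym_kernel (\<lambda>a b. sigma \<theta> a b \<eta>) y)"
    if "mono_on {..<2 * Suc m} y" "nat (y 1 - y 0) = g" for g y
    using that
  proof (induction g arbitrary: y)
    case 0
    then have mono: "mono_on {..<2 * Suc m} y" and eq: "y 0 = y (0 + 1)"
      using mono_onD[OF "0.prems"(1), of 0 1] by auto
    have "mono_on {..<2 * m} (y \<circ> skip_pair 0)"
      by (rule mono_onI) (auto simp: skip_pair_def intro!: mono_onD[OF mono])
    then show ?case
      using Sigma_prod_remove_pair[OF mono _ eq] pfaffian_antisym_kernel_remove_pair[OF _ eq] Suc.IH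
      by simp
  next
    case (Suc g)
    then have "y 0 < y 1"
      by simp
    have "mono_on {..<2 * Suc m} (y(0 := y 0 + 1))"
      by (rule mono_on_shift_first[OF Suc.prems(1) \<open>y 0 < y 1\<close>])
    moreover have "nat ((y(0 := y 0 + 1)) 1 - (y(0 := y 0 + 1)) 0) = g"
      using Suc.prems(2) by simp
    ultimately have "Sigma_prod \<theta> (Suc m) (y(0 := y 0 + 1)) \<eta>
        = pfaffian (Suc m) (antisym_kernel (\<lambda>a b. sigma \<theta> a b \<eta>) (y(0 := y 0 + 1)))"
      by (rule Suc.IH)
    then show ?case
      using Sigma_prod_shift_first[OF \<open>y 0 < y 1\<close>, of \<theta> m \<eta>]
        pfaffian_antisym_kernel_shift_first[OF Suc.prems(1) \<open>y 0 < y 1\<close>, of \<theta> \<eta>] by simp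
  qed
  then show ?case
    using Suc.prems by blast
qed

lemma mono_on_not_strict_adjacent_eq:
  fixes y :: "nat \<Rightarrow> int"
  assumes "mono_on {..<N} y" "\<not> strict_mono_on {..<N} y"
  obtains k where "k + 1 < N" "y k = y (k + 1)"
proof -
  obtain i j where ij: "i < j" "j < N" "\<not> y i < y j"
    using assms(2) unfolding monotone_on_def by auto
  then have "y i \<le> y (i + 1)" "y (i + 1) \<le> y j"
    using mono_onD[OF assms(1)] by auto
  then show ?thesis
    using ij that[of i] by simp
qed

lemma Sigma_prod_one [simp]: "Sigma_prod \<theta> (Suc 0) y = sigma \<theta> (y 0) (y 1)"
  by (simp add: Sigma_prod_def fun_eq_iff)

lemma local_fun_sigma: "local_fun (sigma \<theta> a b)"
  using local_fun_Sigma_prod[of \<theta> 1 "\<lambda>i. if i = 0 then a else b"] by simp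

lemma abs_Sigma_prod_le_1: "0 \<le> \<theta> \<Longrightarrow> \<theta> \<le> 1 \<Longrightarrow> \<bar>Sigma_prod \<theta> m y \<xi>\<bar> \<le> 1"
  unfolding Sigma_prod_def sigma_def abs_prod by (rule prod_le_1) (simp_all add: power_abs power_le_one)

context markov_semigroup
begin

definition pair_kernel :: "real \<Rightarrow> config \<Rightarrow> int \<Rightarrow> int \<Rightarrow> real" where
  "pair_kernel t \<eta> a b = S t (sigma \<theta> a b) \<eta>"

lemma S_Sigma_prod_has_derivative:
  assumes y: "strict_mono_on {..<2 * n} y" and "0 < t"
  shows "((\<lambda>s. S s (Sigma_prod \<theta> n y) \<eta>) has_real_derivative
     (\<Sum>k<2 * n. q (y k) * (S t (Sigma_prod \<theta> n (y(k := y k + 1))) \<eta> - S t (Sigma_prod \<theta> n y) \<eta>)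
               + p (y k) * (S t (Sigma_prod \<theta> n (y(k := y k - 1))) \<eta> - S t (Sigma_prod \<theta> n y) \<eta>))) (at t)"
proof -
  have cont: "continuous_on UNIV (Sigma_prod \<theta> n z)" for z
    by (rule continuous_on_local_fun[OF local_fun_Sigma_prod])
  have gen: "gen \<theta> p q (Sigma_prod \<theta> n y) = (\<lambda>\<xi>. \<Sum>k<2 * n.
      q (y k) * (Sigma_prod \<theta> n (y(k := y k + 1)) \<xi> - Sigma_prod \<theta> n y \<xi>)
    + p (y k) * (Sigma_prod \<theta> n (y(k := y k - 1)) \<xi> - Sigma_prod \<theta> n y \<xi>))"
    by (intro ext gen_Sigma_prod[OF y])
  have S_summand: "S t (\<lambda>\<xi>. a * (A \<xi> - B \<xi>) + b * (C \<xi> - B \<xi>)) \<eta> = a * (S t A \<eta> - S t B \<eta>) + b * (S t C \<eta> - S t B \<eta>)"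
    if "continuous_on UNIV A" "continuous_on UNIV B" "continuous_on UNIV C" for a b A B C
    using that \<open>0 < t\<close> by (simp add: S_linear S_diff continuous_on_diff)
  have "S t (gen \<theta> p q (Sigma_prod \<theta> n y)) \<eta>
      = (\<Sum>k<2 * n. q (y k) * (S t (Sigma_prod \<theta> n (y(k := y k + 1))) \<eta> - S t (Sigma_prod \<theta> n y) \<eta>)
               + p (y k) * (S t (Sigma_prod \<theta> n (y(k := y k - 1))) \<eta> - S t (Sigma_prod \<theta> n y) \<eta>))"
    unfolding gen using \<open>0 < t\<close> cont by (simp add: S_sum S_summand continuous_intros)
  moreover have "continuous_on UNIV (gen \<theta> p q (Sigma_prod \<theta> n y))"
    unfolding gen by (intro continuous_intros cont)
  ultimately show ?thesis
    using S_has_real_derivative[OF local_fun_Sigma_prod _ \<open>0 < t\<close>] by metis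
qed

lemma pair_kernel_has_derivative:
  assumes "a < b" "0 < t"
  shows "((\<lambda>s. pair_kernel s \<eta> a b) has_real_derivative
      q a * (pair_kernel t \<eta> (a + 1) b - pair_kernel t \<eta> a b) + p a * (pair_kernel t \<eta> (a - 1) b - pair_kernel t \<eta> a b)
    + (q b * (pair_kernel t \<eta> a (b + 1) - pair_kernel t \<eta> a b) + p b * (pair_kernel t \<eta> a (b - 1) - pair_kernel t \<eta> a b))) (at t)"
proof -
  define y where "y i = (if i = 0 then a else b)" for i :: nat
  have "strict_mono_on {..<2 * 1} y"
    using \<open>a < b\<close> by (auto simp: y_def monotone_on_def)
  from S_Sigma_prod_has_derivative[OF this \<open>0 < t\<close>, of \<eta>] show ?thesis
    by (simp add: y_def pair_kernel_def numeral_2_eq_2)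
qed

lemma antisym_pair_kernel_has_derivative:
  fixes \<eta> :: config
  assumes y: "strict_mono_on {..<2 * n} y" and ab: "a < 2 * n" "b < 2 * n" "a \<noteq> b" and "0 < t"
  defines "M \<equiv> \<lambda>z. antisym_kernel (pair_kernel t \<eta>) z a b"
  shows "((\<lambda>s. antisym_kernel (pair_kernel s \<eta>) y a b) has_real_derivative
    (\<Sum>k<2 * n. q (y k) * (M (y(k := y k + 1)) - M y) + p (y k) * (M (y(k := y k - 1)) - M y))) (at t)"
proof -
  define f where "f k = q (y k) * (M (y(k := y k + 1)) - M y) + p (y k) * (M (y(k := y k - 1)) - M y)" for k
  have "(\<Sum>k<2 * n. f k) = (\<Sum>k\<in>{a, b}. f k)"
    using ab by (intro sum.mono_neutral_right) (auto simp: f_def M_def antisym_kernel_def)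
  also have "\<dots> = f a + f b"
    using ab by simp
  finally have sum_ab: "(\<Sum>k<2 * n. f k) = f a + f b" .
  show ?thesis
    unfolding f_def[symmetric] sum_ab
  proof (cases "a < b")
    case True
    then have "y a < y b"
      using strict_mono_onD[OF y] ab by simp
    from pair_kernel_has_derivative[OF this \<open>0 < t\<close>, of \<eta>] show "((\<lambda>s. antisym_kernel (pair_kernel s \<eta>) y a b) has_real_derivative f a + f b) (at t)"
      using True ab by (simp add: f_def M_def antisym_kernel_def)
  next
    case False
    then have "b < a" "y b < y a"
      using strict_mono_onD[OF y] ab by auto
    from DERIV_minus[OF pair_kernel_has_derivative[OF \<open>y b < y a\<close> \<open>0 < t\<close>, of \<eta>]]
    show "((\<lambda>s. antisym_kernel (pair_kernel s \<eta>) y a b) has_real_derivative f a + f b) (at t)"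
      using \<open>b < a\<close> ab by (simp add: f_def M_def antisym_kernel_def algebra_simps)
  qed
qed

lemma pfaffian_pair_kernel_has_derivative:
  assumes y: "strict_mono_on {..<2 * n} y" and "0 < t"
  shows "((\<lambda>s. pfaffian n (antisym_kernel (pair_kernel s \<eta>) y)) has_real_derivative
    (\<Sum>k<2 * n.
      q (y k) * (pfaffian n (antisym_kernel (pair_kernel t \<eta>) (y(k := y k + 1)))
        - pfaffian n (antisym_kernel (pair_kernel t \<eta>) y))
    + p (y k) * (pfaffian n (antisym_kernel (pair_kernel t \<eta>) (y(k := y k - 1)))
        - pfaffian n (antisym_kernel (pair_kernel t \<eta>) y)))) (at t)"
proof -
  let ?M = "\<lambda>z. antisym_kernel (pair_kernel t \<eta>) z"
  let ?c = "case_sum (\<lambda>k. q (y k)) (\<lambda>k. p (y k))"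
  let ?N = "case_sum (\<lambda>k. ?M (y(k := y k + 1))) (\<lambda>k. ?M (y(k := y k - 1)))"
  have sum_Plus: "(\<Sum>k\<in>{..<2 * n} <+> {..<2 * n}. ?c k * f k) = (\<Sum>k<2 * n. q (y k) * f (Inl k) + p (y k) * f (Inr k))"
    for f :: "nat + nat \<Rightarrow> real"
    by (simp add: sum.Plus sum.distrib)
  have "((\<lambda>s. pfaffian n (antisym_kernel (pair_kernel s \<eta>) y)) has_real_derivative
     (\<Sum>k\<in>{..<2 * n} <+> {..<2 * n}. ?c k * (pfaffian n (?N k) - pfaffian n (?M y)))) (at t)"
  proof (rule has_real_derivative_pfaffian[where r = "case_sum id id"])
    fix k :: "nat + nat" and a b assume "a \<noteq> case_sum id id k" "b \<noteq> case_sum id id k"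
    then show "?N k a b = ?M y a b"
      by (cases k) (auto simp: antisym_kernel_def)
  next
    fix a b assume "a < 2 * n" "b < 2 * n" "a \<noteq> b"
    from antisym_pair_kernel_has_derivative[OF y this \<open>0 < t\<close>]
    show "((\<lambda>s. antisym_kernel (pair_kernel s \<eta>) y a b) has_real_derivative
        (\<Sum>k\<in>{..<2 * n} <+> {..<2 * n}. ?c k * (?N k a b - ?M y a b))) (at t)"
      unfolding sum_Plus by simp
  qed
  then show ?thesis
    unfolding sum_Plus by simp
qed

lemma continuous_on_sigma: "continuous_on UNIV (sigma \<theta>' a b)"
  by (rule continuous_on_local_fun[OF local_fun_sigma])

lemma pair_kernel_0: "pair_kernel 0 \<eta> a b = sigma \<theta> a b \<eta>"
  by (simp add: pair_kernel_def S_0[OF continuous_on_sigma])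

lemma pair_kernel_same: "0 \<le> t \<Longrightarrow> pair_kernel t \<eta> a a = 1"
proof -
  have "sigma \<theta> a a = (\<lambda>_. 1)"
    by (simp add: fun_eq_iff)
  then show "0 \<le> t \<Longrightarrow> pair_kernel t \<eta> a a = 1"
    using S_const[of t 1] by (simp add: pair_kernel_def)
qed

lemma abs_pair_kernel_le_1: "0 \<le> \<theta> \<Longrightarrow> \<theta> \<le> 1 \<Longrightarrow> 0 \<le> t \<Longrightarrow> \<bar>pair_kernel t \<eta> a b\<bar> \<le> 1"
  unfolding pair_kernel_def
  using abs_Sigma_prod_le_1[of \<theta> "Suc 0" "\<lambda>i. if i = 0 then a else b"]
  by (intro abs_S_le continuous_on_sigma) auto

lemma continuous_on_pfaffian_pair_kernel: "continuous_on {0..} (\<lambda>t. pfaffian n (antisym_kernel (pair_kernel t \<eta>) y))"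
proof (rule continuous_on_pfaffian)
  fix a b
  show "continuous_on {0..} (\<lambda>t. antisym_kernel (pair_kernel t \<eta>) y a b)"
    unfolding antisym_kernel_def pair_kernel_def
    by (cases "a < b"; cases "b < a") (auto intro!: continuous_intros continuous_on_S_time continuous_on_sigma)
qed

definition duality_defect :: "nat \<Rightarrow> config \<Rightarrow> real \<Rightarrow> (nat \<Rightarrow> int) \<Rightarrow> real" where
  "duality_defect n \<eta> t y = S t (Sigma_prod \<theta> n y) \<eta> - pfaffian n (antisym_kernel (pair_kernel t \<eta>) y)"

lemma abs_duality_defect_le:
  assumes "0 \<le> \<theta>" "\<theta> \<le> 1" "0 \<le> t"
  shows "\<bar>duality_defect n \<eta> t y\<bar> \<le> 1 + fact (2 * n)"
proof -
  have "\<bar>S t (Sigma_prod \<theta> n y) \<eta>\<bar> \<le> 1"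
    using abs_Sigma_prod_le_1[OF assms(1,2)] assms(3)
    by (intro abs_S_le continuous_on_local_fun[OF local_fun_Sigma_prod])
  moreover have "\<bar>pfaffian n (antisym_kernel (pair_kernel t \<eta>) y)\<bar> \<le> fact (2 * n)"
    using abs_pair_kernel_le_1[OF assms] by (intro abs_pfaffian_le) (simp add: antisym_kernel_def)
  ultimately show ?thesis
    unfolding duality_defect_def by linarith
qed

lemma duality_defect_0: "mono_on {..<2 * n} y \<Longrightarrow> duality_defect n \<eta> 0 y = 0"
  using Sigma_prod_eq_pfaffian_sigma S_0[OF continuous_on_local_fun[OF local_fun_Sigma_prod]]
  by (simp add: duality_defect_def pair_kernel_0[abs_def])

lemma continuous_on_duality_defect: "continuous_on {0..} (\<lambda>t. duality_defect n \<eta> t y)"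
  unfolding duality_defect_def
  by (intro continuous_intros continuous_on_S_time continuous_on_local_fun[OF local_fun_Sigma_prod]
      continuous_on_pfaffian_pair_kernel)

lemma duality_defect_has_derivative:
  assumes y: "strict_mono_on {..<2 * n} y" and "0 < t"
  shows "((\<lambda>t. duality_defect n \<eta> t y) has_real_derivative
    (\<Sum>k<2 * n. q (y k) * (duality_defect n \<eta> t (y(k := y k + 1)) - duality_defect n \<eta> t y)
              + p (y k) * (duality_defect n \<eta> t (y(k := y k - 1)) - duality_defect n \<eta> t y))) (at t)"
proof -
  define u where "u z = S t (Sigma_prod \<theta> n z) \<eta>" for z
  define v where "v z = pfaffian n (antisym_kernel (pair_kernel t \<eta>) z)" for z
  have deriv: "((\<lambda>t. duality_defect n \<eta> t y) has_real_derivative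
      (\<Sum>k<2 * n. q (y k) * (u (y(k := y k + 1)) - u y) + p (y k) * (u (y(k := y k - 1)) - u y))
    - (\<Sum>k<2 * n. q (y k) * (v (y(k := y k + 1)) - v y) + p (y k) * (v (y(k := y k - 1)) - v y))) (at t)"
    unfolding duality_defect_def u_def v_def
    by (intro DERIV_diff S_Sigma_prod_has_derivative pfaffian_pair_kernel_has_derivative y \<open>0 < t\<close>)
  have defect_uv: "duality_defect n \<eta> t z = u z - v z" for z
    by (simp add: duality_defect_def u_def v_def)
  have "(\<Sum>k<2 * n. q (y k) * (u (y(k := y k + 1)) - u y) + p (y k) * (u (y(k := y k - 1)) - u y))
    - (\<Sum>k<2 * n. q (y k) * (v (y(k := y k + 1)) - v y) + p (y k) * (v (y(k := y k - 1)) - v y))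
    = (\<Sum>k<2 * n. q (y k) * (duality_defect n \<eta> t (y(k := y k + 1)) - duality_defect n \<eta> t y)
              + p (y k) * (duality_defect n \<eta> t (y(k := y k - 1)) - duality_defect n \<eta> t y))"
    unfolding sum_subtractf[symmetric] defect_uv by (intro sum.cong refl) (simp add: algebra_simps)
  with deriv show ?thesis
    by simp
qed

lemma duality_defect_remove_pair:
  assumes mono: "mono_on {..<2 * Suc m} y" and k: "k + 1 < 2 * Suc m" "y k = y (k + 1)" and "0 \<le> t"
  shows "duality_defect (Suc m) \<eta> t y = duality_defect m \<eta> t (y \<circ> skip_pair k)"
  using Sigma_prod_remove_pair[OF mono k] pfaffian_antisym_kernel_remove_pair[OF k, of "pair_kernel t \<eta>"]
    pair_kernel_same[OF \<open>0 \<le> t\<close>]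
  by (simp add: duality_defect_def)

theorem duality_defect_eq_0:
  assumes \<theta>: "0 \<le> \<theta>" "\<theta> \<le> 1" and rates: "\<And>x. \<bar>q x\<bar> \<le> M \<and> \<bar>p x\<bar> \<le> M"
    and "mono_on {..<2 * n} y" "0 \<le> t"
  shows "duality_defect n \<eta> t y = 0"
  using assms(4,5)
proof (induction n arbitrary: y t)
  case 0
  have "Sigma_prod \<theta> 0 y = (\<lambda>_. 1)"
    by (simp add: Sigma_prod_def fun_eq_iff)
  then show ?case
    using S_one[OF "0.prems"(2)] by (simp add: duality_defect_def)
next
  case (Suc m)
  let ?Y = "{y. mono_on {..<2 * Suc m} y}"
  show ?case
  proof (rule backward_equation_solution_eq_0[where d = "duality_defect (Suc m) \<eta>"
        and Y = ?Y and Ys = "{y. strict_mono_on {..<2 * Suc m} y}" and \<alpha> = q and \<beta> = p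
        and N = "2 * Suc m" and B = "1 + fact (2 * Suc m)" and M = M])
    fix t :: real and y :: "nat \<Rightarrow> int"
    assume "0 \<le> t" "y \<in> ?Y" "y \<notin> {y. strict_mono_on {..<2 * Suc m} y}"
    then have mono: "mono_on {..<2 * Suc m} y" and "\<not> strict_mono_on {..<2 * Suc m} y"
      by simp_all
    then obtain k where k: "k + 1 < 2 * Suc m" "y k = y (k + 1)"
      by (rule mono_on_not_strict_adjacent_eq)
    have "mono_on {..<2 * m} (y \<circ> skip_pair k)"
      using k(1) by (intro mono_onI) (auto simp: skip_pair_def intro!: mono_onD[OF mono])
    then show "duality_defect (Suc m) \<eta> t y = 0"
      using duality_defect_remove_pair[OF mono k \<open>0 \<le> t\<close>] Suc.IH \<open>0 \<le> t\<close> by simp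
  next
    fix y :: "nat \<Rightarrow> int" and k assume "y \<in> {y. strict_mono_on {..<2 * Suc m} y}" "k < 2 * Suc m"
    then show "y(k := y k + 1) \<in> ?Y \<and> y(k := y k - 1) \<in> ?Y"
      using mono_on_shift_endpoint[of "2 * Suc m" y k 1] mono_on_shift_endpoint[of "2 * Suc m" y k "-1"] by simp
  qed (use Suc.prems rates in \<open>blast intro: abs_duality_defect_le[OF \<theta>] duality_defect_0
      continuous_on_duality_defect duality_defect_has_derivative\<close>)+
qed

end

theorem lemma2:
  fixes \<theta> :: real and p q :: "int \<Rightarrow> real"
    and S :: "real \<Rightarrow> (config \<Rightarrow> real) \<Rightarrow> config \<Rightarrow> real"
    and \<eta> :: config and n :: nat and y :: "nat \<Rightarrow> int" and t :: real
  assumes "0 \<le> \<theta>" and "\<theta> \<le> 1"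
    and "\<forall>x. 0 \<le> p x" and "\<forall>x. 0 \<le> q x"
    and "\<exists>M. \<forall>x. p x \<le> M \<and> q x \<le> M"
    and "markov_semigroup_gen \<theta> p q S"
    and "1 \<le> n"
    and "\<forall>i j. i \<le> j \<and> j < 2 * n \<longrightarrow> y i \<le> y j"
    and "0 \<le> t"
  shows "S t (Sigma_prod \<theta> n y) \<eta> =
         pfaffian n (\<lambda>i j. if i < j then S t (sigma \<theta> (y i) (y j)) \<eta>
                           else if j < i then - S t (sigma \<theta> (y j) (y i)) \<eta>
                           else 0)"
proof -
  interpret markov_semigroup \<theta> p q S
    by unfold_locales (rule assms(6))
  obtain M where "\<forall>x. p x \<le> M \<and> q x \<le> M"
    using assms(5) by blast
  then have rates: "\<bar>q x\<bar> \<le> M \<and> \<bar>p x\<bar> \<le> M" for x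
    using assms(3,4) by auto
  have "mono_on {..<2 * n} y"
    using assms(8) by (intro mono_onI) auto
  then have "S t (Sigma_prod \<theta> n y) \<eta> = pfaffian n (antisym_kernel (pair_kernel t \<eta>) y)"
    using duality_defect_eq_0[OF assms(1,2) rates _ assms(9)] by (simp add: duality_defect_def)
  also have "antisym_kernel (pair_kernel t \<eta>) y = (\<lambda>i j. if i < j then S t (sigma \<theta> (y i) (y j)) \<eta>
      else if j < i then - S t (sigma \<theta> (y j) (y i)) \<eta> else 0)"
    by (simp add: fun_eq_iff antisym_kernel_def pair_kernel_def)
  finally show ?thesis .
qed

end
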